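(* Let $\mathcal L$ be a non-trivial geometric lattice. The bilinear map $\bullet$ defined on modular diagrams by $(\mathcal E_1,\iota_1,J_1)\bullet(\mathcal E_2,\iota_2,J_2)=(\mathcal E_1\cup_{\mathcal L}\mathcal E_2,\iota_{12},J_1J_2)$ is compatible with the relations (R1)–(R5) in each argument, hence descends to a well-defined bilinear map $\mathcal{MD}(\mathcal L)\otimes\mathcal{MD}(\mathcal L)\to\mathcal{MD}(\mathcal L)$.
   Context: Geometric lattices. A geometric lattice is a finite lattice $\mathcal L$ (bottom $\hat0$, top $\hat1$, join $\vee$, meet $\wedge$) which is ranked (all maximal chains from $\hat0$ to a given element $F$ have the same length $\mathrm{rk}(F)$), atomic (every element is a join of atoms, i.e. rank-one elements) and semimodular ($\mathrm{rk}(F_1\wedge F_2)+\mathrm{rk}(F_1\vee F_2)\le\mathrm{rk}(F_1)+\mathrm{rk}(F_2)$). Elements are called flats, $\mathrm{At}(\mathcal L)$ denotes the set of atoms, and $\mathcal L$ is non-trivial if it has at least two elements. For a finite family $J$ of atoms, $\bigvee J$ is its join ($\bigvee\emptyset=\hat0$). Every interval $[F_1,F_2]$ is a geometric lattice, and products of geometric lattices are geometric lattices. A flat $F$ is modular if $\mathrm{rk}(F\wedge F')+\mathrm{rk}(F\vee F')=\mathrm{rk}(F)+\mathrm{rk}(F')$ for every flat $F'$. An embedding $\varphi:\mathcal L_1\to\mathcal L_2$ of geometric lattices is an injective order-preserving map preserving joins and sending atoms to atoms. Modular diagrams. Let $\mathcal L$ be a non-trivial geometric lattice. A modular extension of $\mathcal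 L$ is a pair $(\mathcal E,\iota)$ where $\mathcal E$ is a geometric lattice and $\iota:\mathcal L\to\mathcal E$ is an embedding whose image is an interval $[\hat0,F_\iota]$ with $F_\iota$ a modular flat of $\mathcal E$. A modular diagram of $\mathcal L$ is a triple $\Gamma=(\mathcal E,\iota,J)$ with $(\mathcal E,\iota)$ a modular extension and $J=(H_1,\dots,H_n)$ a finite word in the alphabet $\mathrm{At}(\mathcal E)$; its degree is $\deg\Gamma=n-2\big(\mathrm{rk}\bigvee J-\mathrm{rk}((\bigvee J)\wedge F_\iota)\big)$. $\mathcal{MD}(\mathcal L)$ is the $\mathbb Z$-graded $\mathbb Q$-vector space spanned by all modular diagrams, quotiented by the relations: (R1) $(\mathcal E,\iota,J)\sim-(\mathcal E,\iota,J')$ if $J'$ is obtained from $J$ by transposing two letters; (R2) $(\mathcal E,\iota,J)\sim(\mathcal E',\iota',J')$ if there is an embedding $\varphi:\mathcal E\to\mathcal E'$ with $\mathrm{rk}(\mathcal E)=\mathrm{rk}(\mathcal E')$, $\iota'=\varphi\circ\iota$ and $J'=\varphi(J)$ letterwise; (R3) $(\mathcal E,\iota,J)\sim0$ if $F_\iota\vee\bigvee J<\hat1_{\mathcal E}$; (R4) $(\mathcal E,\iota,J)\sim0$ if $\mathcal E\cong\mathcal E_1\times\mathcal E_2$ with $\mathcal E_1,\mathcal E_2$ non-trivial and $F_\iota\in\mathcal E_1\times\{\hat0\}$; (R5) $(\mathcal E,\iota,J)\sim0$ if there is a modular flat $F\ge F_\iota$ of $\mathcal E$ such that exactly two letters of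 $J$ are not below $F$. Product. For modular extensions $(\mathcal E_1,\iota_1),(\mathcal E_2,\iota_2)$ of $\mathcal L$, the pushout $\mathcal E_1\cup_{\mathcal L}\mathcal E_2$ is the subposet of $\mathcal E_1\times\mathcal E_2$ of pairs $(F_1,F_2)$ with $\iota_1^{-1}(F_1\wedge F_{\iota_1})=\iota_2^{-1}(F_2\wedge F_{\iota_2})$; it is a geometric lattice, and $\iota_{12}(A)=(\iota_1(A),\iota_2(A))$ makes it a modular extension of $\mathcal L$. Its atoms are the $(H,\hat0)$ with $H\in\mathrm{At}(\mathcal E_1)\setminus\iota_1(\mathcal L)$, the $(\hat0,H)$ with $H\in\mathrm{At}(\mathcal E_2)\setminus\iota_2(\mathcal L)$, and the $(\iota_1(H),\iota_2(H))$ with $H\in\mathrm{At}(\mathcal L)$, which identifies $\mathrm{At}(\mathcal E_1\cup_{\mathcal L}\mathcal E_2)$ with $\mathrm{At}(\mathcal E_1)\cup_{\mathrm{At}(\mathcal L)}\mathrm{At}(\mathcal E_2)$; $J_1J_2$ denotes the concatenated word read in these atoms. *)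

theory Defs
  imports Complex_Main "HOL-Library.Nat_Bijection"
begin

record 'a lat =
  flats :: "'a set"
  lle :: "'a \<Rightarrow> 'a \<Rightarrow> bool"

definition lless :: "'a lat \<Rightarrow> 'a \<Rightarrow> 'a \<Rightarrow> bool" where
  "lless L x y \<longleftrightarrow> lle L x y \<and> x \<noteq> y"

definition is_lub :: "'a lat \<Rightarrow> 'a set \<Rightarrow> 'a \<Rightarrow> bool" where
  "is_lub L S z \<longleftrightarrow> z \<in> flats L \<and> (\<forall>x\<in>S. lle L x z)
     \<and> (\<forall>w\<in>flats L. (\<forall>x\<in>S. lle L x w) \<longrightarrow> lle L z w)"

definition is_glb :: "'a lat \<Rightarrow> 'a set \<Rightarrow> 'a \<Rightarrow> bool" where
  "is_glb L S z \<longleftrightarrow> z \<in> flats L \<and> (\<forall>x\<in>S. lle L z x)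
     \<and> (\<forall>w\<in>flats L. (\<forall>x\<in>S. lle L w x) \<longrightarrow> lle L w z)"

definition Join :: "'a lat \<Rightarrow> 'a set \<Rightarrow> 'a" where
  "Join L S = (THE z. is_lub L S z)"

definition join :: "'a lat \<Rightarrow> 'a \<Rightarrow> 'a \<Rightarrow> 'a" where
  "join L x y = Join L {x, y}"

definition meet :: "'a lat \<Rightarrow> 'a \<Rightarrow> 'a \<Rightarrow> 'a" where
  "meet L x y = (THE z. is_glb L {x, y} z)"

definition bot :: "'a lat \<Rightarrow> 'a" where
  "bot L = Join L {}"

definition top :: "'a lat \<Rightarrow> 'a" where
  "top L = Join L (flats L)"

definition finite_lattice :: "'a lat \<Rightarrow> bool" where
  "finite_lattice L \<longleftrightarrow> finite (flats L) \<and> flats L \<noteq> {}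
     \<and> (\<forall>x\<in>flats L. lle L x x)
     \<and> (\<forall>x\<in>flats L. \<forall>y\<in>flats L. lle L x y \<and> lle L y x \<longrightarrow> x = y)
     \<and> (\<forall>x\<in>flats L. \<forall>y\<in>flats L. \<forall>z\<in>flats L. lle L x y \<and> lle L y z \<longrightarrow> lle L x z)
     \<and> (\<forall>x\<in>flats L. \<forall>y\<in>flats L. (\<exists>z. is_lub L {x, y} z) \<and> (\<exists>z. is_glb L {x, y} z))"

definition covers :: "'a lat \<Rightarrow> 'a \<Rightarrow> 'a \<Rightarrow> bool" where
  "covers L x y \<longleftrightarrow> x \<in> flats L \<and> y \<in> flats L \<and> lless L x y
     \<and> \<not> (\<exists>z\<in>flats L. lless L x z \<and> lless L z y)"

definition max_chain :: "'a lat \<Rightarrow> 'a \<Rightarrow> nat \<Rightarrow> bool" where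
  "max_chain L F n \<longleftrightarrow> (\<exists>xs. length xs = Suc n \<and> set xs \<subseteq> flats L
     \<and> xs ! 0 = bot L \<and> xs ! n = F \<and> (\<forall>i<n. covers L (xs ! i) (xs ! Suc i)))"

definition ranked :: "'a lat \<Rightarrow> bool" where
  "ranked L \<longleftrightarrow> (\<forall>F\<in>flats L. \<forall>m n. max_chain L F m \<and> max_chain L F n \<longrightarrow> m = n)"

definition rk :: "'a lat \<Rightarrow> 'a \<Rightarrow> nat" where
  "rk L F = (THE n. max_chain L F n)"

definition atoms :: "'a lat \<Rightarrow> 'a set" where
  "atoms L = {a \<in> flats L. rk L a = 1}"

definition atomic :: "'a lat \<Rightarrow> bool" where
  "atomic L \<longleftrightarrow> (\<forall>F\<in>flats L. \<exists>S\<subseteq>atoms L. F = Join L S)"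

definition semimodular :: "'a lat \<Rightarrow> bool" where
  "semimodular L \<longleftrightarrow> (\<forall>F1\<in>flats L. \<forall>F2\<in>flats L.
     rk L (meet L F1 F2) + rk L (join L F1 F2) \<le> rk L F1 + rk L F2)"

definition geometric_lattice :: "'a lat \<Rightarrow> bool" where
  "geometric_lattice L \<longleftrightarrow> finite_lattice L \<and> ranked L \<and> atomic L \<and> semimodular L"

definition nontrivial :: "'a lat \<Rightarrow> bool" where
  "nontrivial L \<longleftrightarrow> card (flats L) \<ge> 2"

definition modular_flat :: "'a lat \<Rightarrow> 'a \<Rightarrow> bool" where
  "modular_flat L F \<longleftrightarrow> F \<in> flats L \<and> (\<forall>F'\<in>flats L.
     rk L (meet L F F') + rk L (join L F F') = rk L F + rk L F')"

definition interval :: "'a lat \<Rightarrow> 'a \<Rightarrow> 'a \<Rightarrow> 'a set" where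
  "interval L a b = {x \<in> flats L. lle L a x \<and> lle L x b}"

definition embedding :: "'a lat \<Rightarrow> 'b lat \<Rightarrow> ('a \<Rightarrow> 'b) \<Rightarrow> bool" where
  "embedding L1 L2 \<phi> \<longleftrightarrow> inj_on \<phi> (flats L1) \<and> \<phi> ` flats L1 \<subseteq> flats L2
     \<and> (\<forall>x\<in>flats L1. \<forall>y\<in>flats L1. lle L1 x y \<longrightarrow> lle L2 (\<phi> x) (\<phi> y))
     \<and> (\<forall>S\<subseteq>flats L1. \<phi> (Join L1 S) = Join L2 (\<phi> ` S))
     \<and> \<phi> ` atoms L1 \<subseteq> atoms L2"

text \<open>Extensions are lattices whose flats are natural numbers (every finite lattice
  is isomorphic to such a lattice).\<close>
definition F_iota :: "'a lat \<Rightarrow> ('a \<Rightarrow> nat) \<Rightarrow> nat" where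
  "F_iota L \<iota> = \<iota> (top L)"

definition modular_extension :: "'a lat \<Rightarrow> nat lat \<Rightarrow> ('a \<Rightarrow> nat) \<Rightarrow> bool" where
  "modular_extension L E \<iota> \<longleftrightarrow> geometric_lattice E \<and> embedding L E \<iota>
     \<and> (\<exists>F. modular_flat E F \<and> \<iota> ` flats L = interval E (bot E) F)"

type_synonym 'a mdiag = "nat lat \<times> ('a \<Rightarrow> nat) \<times> nat list"

definition modular_diagram :: "'a lat \<Rightarrow> 'a mdiag \<Rightarrow> bool" where
  "modular_diagram L \<Gamma> = (case \<Gamma> of (E, \<iota>, J) \<Rightarrow>
     modular_extension L E \<iota> \<and> set J \<subseteq> atoms E)"

definition transposed :: "'b list \<Rightarrow> 'b list \<Rightarrow> bool" where
  "transposed J J' \<longleftrightarrow> (\<exists>i j. i < length J \<and> j < length J \<and> i \<noteq> j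
     \<and> J' = J[i := J ! j, j := J ! i])"

definition rel_R1 :: "'a lat \<Rightarrow> 'a mdiag \<Rightarrow> 'a mdiag \<Rightarrow> bool" where
  "rel_R1 L \<Gamma> \<Gamma>' \<longleftrightarrow> modular_diagram L \<Gamma> \<and> modular_diagram L \<Gamma>'
     \<and> fst \<Gamma> = fst \<Gamma>' \<and> fst (snd \<Gamma>) = fst (snd \<Gamma>')
     \<and> transposed (snd (snd \<Gamma>)) (snd (snd \<Gamma>'))"

definition rel_R2 :: "'a lat \<Rightarrow> 'a mdiag \<Rightarrow> 'a mdiag \<Rightarrow> bool" where
  "rel_R2 L \<Gamma> \<Gamma>' \<longleftrightarrow> modular_diagram L \<Gamma> \<and> modular_diagram L \<Gamma>'
     \<and> (case \<Gamma> of (E, \<iota>, J) \<Rightarrow> case \<Gamma>' of (E', \<iota>', J') \<Rightarrow>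
         (\<exists>\<phi>. embedding E E' \<phi> \<and> rk E (top E) = rk E' (top E')
            \<and> (\<forall>x\<in>flats L. \<iota>' x = \<phi> (\<iota> x)) \<and> J' = map \<phi> J))"

definition rel_R3 :: "'a lat \<Rightarrow> 'a mdiag \<Rightarrow> bool" where
  "rel_R3 L \<Gamma> \<longleftrightarrow> modular_diagram L \<Gamma>
     \<and> (case \<Gamma> of (E, \<iota>, J) \<Rightarrow> lless E (join E (F_iota L \<iota>) (Join E (set J))) (top E))"

definition order_iso_prod :: "nat lat \<Rightarrow> nat lat \<Rightarrow> nat lat \<Rightarrow> (nat \<Rightarrow> nat \<times> nat) \<Rightarrow> bool" where
  "order_iso_prod E E1 E2 \<psi> \<longleftrightarrow> bij_betw \<psi> (flats E) (flats E1 \<times> flats E2)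
     \<and> (\<forall>x\<in>flats E. \<forall>y\<in>flats E. lle E x y \<longleftrightarrow>
          (lle E1 (fst (\<psi> x)) (fst (\<psi> y)) \<and> lle E2 (snd (\<psi> x)) (snd (\<psi> y))))"

definition rel_R4 :: "'a lat \<Rightarrow> 'a mdiag \<Rightarrow> bool" where
  "rel_R4 L \<Gamma> \<longleftrightarrow> modular_diagram L \<Gamma>
     \<and> (case \<Gamma> of (E, \<iota>, J) \<Rightarrow>
         (\<exists>E1 E2 \<psi>. finite_lattice E1 \<and> finite_lattice E2 \<and> nontrivial E1 \<and> nontrivial E2
            \<and> order_iso_prod E E1 E2 \<psi> \<and> snd (\<psi> (F_iota L \<iota>)) = bot E2))"

definition rel_R5 :: "'a lat \<Rightarrow> 'a mdiag \<Rightarrow> bool" where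
  "rel_R5 L \<Gamma> \<longleftrightarrow> modular_diagram L \<Gamma>
     \<and> (case \<Gamma> of (E, \<iota>, J) \<Rightarrow>
         (\<exists>F. modular_flat E F \<and> lle E (F_iota L \<iota>) F
            \<and> card {i. i < length J \<and> \<not> lle E (J ! i) F} = 2))"

definition delta :: "'b \<Rightarrow> 'b \<Rightarrow> rat" where
  "delta x = (\<lambda>y. if y = x then 1 else 0)"

definition supp :: "('b \<Rightarrow> rat) \<Rightarrow> 'b set" where
  "supp u = {x. u x \<noteq> 0}"

text \<open>Formal finite Q-linear combinations of modular diagrams of L.\<close>
definition free_MD :: "'a lat \<Rightarrow> ('a mdiag \<Rightarrow> rat) set" where
  "free_MD L = {u. finite (supp u) \<and> supp u \<subseteq> {\<Gamma>. modular_diagram L \<Gamma>}}"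

text \<open>The subspace spanned by the relations (R1)--(R5); MD(L) is free_MD L modulo it.\<close>
inductive_set rel_span :: "'a lat \<Rightarrow> ('a mdiag \<Rightarrow> rat) set" for L where
  zero: "(\<lambda>_. 0) \<in> rel_span L"
| add: "u \<in> rel_span L \<Longrightarrow> v \<in> rel_span L \<Longrightarrow> (\<lambda>x. u x + v x) \<in> rel_span L"
| smult: "u \<in> rel_span L \<Longrightarrow> (\<lambda>x. c * u x) \<in> rel_span L"
| R1: "rel_R1 L \<Gamma> \<Gamma>' \<Longrightarrow> (\<lambda>x. delta \<Gamma> x + delta \<Gamma>' x) \<in> rel_span L"
| R2: "rel_R2 L \<Gamma> \<Gamma>' \<Longrightarrow> (\<lambda>x. delta \<Gamma> x - delta \<Gamma>' x) \<in> rel_span L"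
| R3: "rel_R3 L \<Gamma> \<Longrightarrow> delta \<Gamma> \<in> rel_span L"
| R4: "rel_R4 L \<Gamma> \<Longrightarrow> delta \<Gamma> \<in> rel_span L"
| R5: "rel_R5 L \<Gamma> \<Longrightarrow> delta \<Gamma> \<in> rel_span L"

text \<open>The pushout E1 \<union>_L E2, with a pair (F1,F2) encoded as the natural number
  prod_encode (F1,F2).\<close>
definition pushout :: "'a lat \<Rightarrow> nat lat \<Rightarrow> ('a \<Rightarrow> nat) \<Rightarrow> nat lat \<Rightarrow> ('a \<Rightarrow> nat) \<Rightarrow> nat lat" where
  "pushout L E1 \<iota>1 E2 \<iota>2 =
     \<lparr> flats = prod_encode ` {(F1, F2). F1 \<in> flats E1 \<and> F2 \<in> flats E2 \<and>
          inv_into (flats L) \<iota>1 (meet E1 F1 (F_iota L \<iota>1))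
            = inv_into (flats L) \<iota>2 (meet E2 F2 (F_iota L \<iota>2))},
       lle = (\<lambda>x y. lle E1 (fst (prod_decode x)) (fst (prod_decode y))
                  \<and> lle E2 (snd (prod_decode x)) (snd (prod_decode y))) \<rparr>"

definition iota12 :: "('a \<Rightarrow> nat) \<Rightarrow> ('a \<Rightarrow> nat) \<Rightarrow> 'a \<Rightarrow> nat" where
  "iota12 \<iota>1 \<iota>2 A = prod_encode (\<iota>1 A, \<iota>2 A)"

text \<open>Atoms of E1 (resp. E2) read as atoms of the pushout: H \<mapsto> (H, \<hat>0) if H is not in
  the image of L, and \<iota>1(A) \<mapsto> (\<iota>1(A), \<iota>2(A)) for A an atom of L.\<close>
definition lift1 :: "'a lat \<Rightarrow> nat lat \<Rightarrow> ('a \<Rightarrow> nat) \<Rightarrow> ('a \<Rightarrow> nat) \<Rightarrow> nat \<Rightarrow> nat" where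
  "lift1 L E1 \<iota>1 \<iota>2 H = prod_encode (H, \<iota>2 (inv_into (flats L) \<iota>1 (meet E1 H (F_iota L \<iota>1))))"

definition lift2 :: "'a lat \<Rightarrow> nat lat \<Rightarrow> ('a \<Rightarrow> nat) \<Rightarrow> ('a \<Rightarrow> nat) \<Rightarrow> nat \<Rightarrow> nat" where
  "lift2 L E2 \<iota>1 \<iota>2 H = prod_encode (\<iota>1 (inv_into (flats L) \<iota>2 (meet E2 H (F_iota L \<iota>2))), H)"

definition dprod :: "'a lat \<Rightarrow> 'a mdiag \<Rightarrow> 'a mdiag \<Rightarrow> 'a mdiag" where
  "dprod L \<Gamma>1 \<Gamma>2 = (case \<Gamma>1 of (E1, \<iota>1, J1) \<Rightarrow> case \<Gamma>2 of (E2, \<iota>2, J2) \<Rightarrow>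
     (pushout L E1 \<iota>1 E2 \<iota>2, iota12 \<iota>1 \<iota>2,
      map (lift1 L E1 \<iota>1 \<iota>2) J1 @ map (lift2 L E2 \<iota>1 \<iota>2) J2))"

definition vprod :: "'a lat \<Rightarrow> ('a mdiag \<Rightarrow> rat) \<Rightarrow> ('a mdiag \<Rightarrow> rat) \<Rightarrow> ('a mdiag \<Rightarrow> rat)" where
  "vprod L u v = (\<lambda>\<Gamma>. \<Sum>p\<in>{p \<in> supp u \<times> supp v. dprod L (fst p) (snd p) = \<Gamma>}.
                        u (fst p) * v (snd p))"

end

theory Submission
  imports Defs
begin

(* By bilinearity it suffices to show that, for a fixed diagram D, both maps G |-> G . D and
   G |-> D . G send each relation (R1)-(R5) to a relation of the same kind.

   The key fact is that the pushout P of two modular extensions E1, E2 of L is again a modular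
   extension: its flats are the pairs (x1, x2) whose meets with F1 and F2 come from the same flat
   of L, a join is the componentwise join enlarged by the image of the join of the two flats of L
   so obtained, the rank is rk x1 + rk x2 - rk (x1 meet F1), and P is atomic and semimodular with
   (F1, F2) modular. Then (R1) is preserved since a transposition in one word is a transposition
   in the concatenated word, (R2) since embeddings of the factors induce an embedding of the
   pushouts of the same rank, (R3) since F joined with the word stays below the pair of the
   corresponding joins in E1 and E2, (R5) by pairing the modular flat of one factor with the top
   of the other, and (R4) since a splitting E1 = B1 x B2 with F1 in B1 splits the pushout as
   A x B2; the case of a split second factor follows by swapping the factors. *)

section \<open>Finite, ranked and geometric lattices\<close>

locale fin_lattice =
  fixes L :: "'a lat"
  assumes is_finite_lattice: "finite_lattice L"
begin

lemma finite_flats: "finite (flats L)"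
  and flats_nonempty: "flats L \<noteq> {}"
  and le_refl[simp]: "x \<in> flats L \<Longrightarrow> lle L x x"
  and le_antisym: "x \<in> flats L \<Longrightarrow> y \<in> flats L \<Longrightarrow> lle L x y \<Longrightarrow> lle L y x \<Longrightarrow> x = y"
  and le_trans: "x \<in> flats L \<Longrightarrow> y \<in> flats L \<Longrightarrow> z \<in> flats L \<Longrightarrow> lle L x y \<Longrightarrow> lle L y z \<Longrightarrow> lle L x z"
  and lub_pair_ex: "x \<in> flats L \<Longrightarrow> y \<in> flats L \<Longrightarrow> \<exists>z. is_lub L {x, y} z"
  and glb_pair_ex: "x \<in> flats L \<Longrightarrow> y \<in> flats L \<Longrightarrow> \<exists>z. is_glb L {x, y} z"
  using is_finite_lattice unfolding finite_lattice_def by blast+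

lemma lub_unique: "is_lub L S z \<Longrightarrow> is_lub L S z' \<Longrightarrow> z = z'"
  unfolding is_lub_def by (blast intro: le_antisym)

lemma glb_unique: "is_glb L S z \<Longrightarrow> is_glb L S z' \<Longrightarrow> z = z'"
  unfolding is_glb_def by (blast intro: le_antisym)

lemma glb_ex_nonempty: "finite S \<Longrightarrow> S \<noteq> {} \<Longrightarrow> S \<subseteq> flats L \<Longrightarrow> \<exists>z. is_glb L S z"
proof (induction S rule: finite_ne_induct)
  case (singleton x)
  then show ?case unfolding is_glb_def by auto
next
  case (insert x F)
  then obtain g where g: "is_glb L F g" by auto
  then have "g \<in> flats L" unfolding is_glb_def by auto
  then obtain h where "is_glb L {x, g} h" using glb_pair_ex[of x g] insert.prems by auto
  then have "is_glb L (insert x F) h"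
    using g insert.prems unfolding is_glb_def by (auto simp: subset_iff intro: le_trans[of h g])
  then show ?case by blast
qed

lemma lub_ex_nonempty: "finite S \<Longrightarrow> S \<noteq> {} \<Longrightarrow> S \<subseteq> flats L \<Longrightarrow> \<exists>z. is_lub L S z"
proof (induction S rule: finite_ne_induct)
  case (singleton x)
  then show ?case unfolding is_lub_def by auto
next
  case (insert x F)
  then obtain g where g: "is_lub L F g" by auto
  then have "g \<in> flats L" unfolding is_lub_def by auto
  then obtain h where "is_lub L {x, g} h" using lub_pair_ex[of x g] insert.prems by auto
  then have "is_lub L (insert x F) h"
    using g insert.prems unfolding is_lub_def by (auto simp: subset_iff intro: le_trans[of _ g h])
  then show ?case by blast
qed

text \<open>The empty join exists because the meet of all flats is a least flat.\<close>

lemma lub_ex: "S \<subseteq> flats L \<Longrightarrow> \<exists>z. is_lub L S z"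
proof (cases "S = {}")
  case True
  obtain g where "is_glb L (flats L) g" using glb_ex_nonempty[OF finite_flats flats_nonempty] by auto
  then have "is_lub L S g" using True unfolding is_glb_def is_lub_def by auto
  then show ?thesis by blast
next
  case False
  assume "S \<subseteq> flats L"
  then show ?thesis using lub_ex_nonempty[OF finite_subset[OF _ finite_flats] False] by auto
qed

lemma Join_lub: "S \<subseteq> flats L \<Longrightarrow> is_lub L S (Join L S)"
  unfolding Join_def using lub_ex lub_unique by (metis theI)

lemma Join_eq: "is_lub L S z \<Longrightarrow> Join L S = z"
  unfolding Join_def using lub_unique by blast

lemma Join_in[simp]: "S \<subseteq> flats L \<Longrightarrow> Join L S \<in> flats L"
  and Join_upper: "S \<subseteq> flats L \<Longrightarrow> x \<in> S \<Longrightarrow> lle L x (Join L S)"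
  and Join_least: "S \<subseteq> flats L \<Longrightarrow> w \<in> flats L \<Longrightarrow> (\<And>x. x \<in> S \<Longrightarrow> lle L x w) \<Longrightarrow> lle L (Join L S) w"
  using Join_lub unfolding is_lub_def by auto

lemma join_in[simp]: "x \<in> flats L \<Longrightarrow> y \<in> flats L \<Longrightarrow> join L x y \<in> flats L"
  and join_upper1: "x \<in> flats L \<Longrightarrow> y \<in> flats L \<Longrightarrow> lle L x (join L x y)"
  and join_upper2: "x \<in> flats L \<Longrightarrow> y \<in> flats L \<Longrightarrow> lle L y (join L x y)"
  and join_least: "x \<in> flats L \<Longrightarrow> y \<in> flats L \<Longrightarrow> w \<in> flats L \<Longrightarrow> lle L x w \<Longrightarrow> lle L y w
    \<Longrightarrow> lle L (join L x y) w"
  unfolding join_def by (auto intro: Join_upper Join_least)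

lemma join_eq: "x \<in> flats L \<Longrightarrow> y \<in> flats L \<Longrightarrow> z \<in> flats L \<Longrightarrow> lle L x z \<Longrightarrow> lle L y z
   \<Longrightarrow> (\<And>w. w \<in> flats L \<Longrightarrow> lle L x w \<Longrightarrow> lle L y w \<Longrightarrow> lle L z w) \<Longrightarrow> join L x y = z"
  unfolding join_def by (rule Join_eq) (auto simp: is_lub_def)

lemma meet_glb: "x \<in> flats L \<Longrightarrow> y \<in> flats L \<Longrightarrow> is_glb L {x, y} (meet L x y)"
  unfolding meet_def using glb_pair_ex glb_unique by (metis theI)

lemma meet_in[simp]: "x \<in> flats L \<Longrightarrow> y \<in> flats L \<Longrightarrow> meet L x y \<in> flats L"
  and meet_lower1: "x \<in> flats L \<Longrightarrow> y \<in> flats L \<Longrightarrow> lle L (meet L x y) x"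
  and meet_lower2: "x \<in> flats L \<Longrightarrow> y \<in> flats L \<Longrightarrow> lle L (meet L x y) y"
  and meet_greatest: "x \<in> flats L \<Longrightarrow> y \<in> flats L \<Longrightarrow> w \<in> flats L \<Longrightarrow> lle L w x \<Longrightarrow> lle L w y
    \<Longrightarrow> lle L w (meet L x y)"
  using meet_glb unfolding is_glb_def by auto

lemma meet_eq: "x \<in> flats L \<Longrightarrow> y \<in> flats L \<Longrightarrow> z \<in> flats L \<Longrightarrow> lle L z x \<Longrightarrow> lle L z y
   \<Longrightarrow> (\<And>w. w \<in> flats L \<Longrightarrow> lle L w x \<Longrightarrow> lle L w y \<Longrightarrow> lle L w z) \<Longrightarrow> meet L x y = z"
  by (rule glb_unique[OF meet_glb]) (auto simp: is_glb_def)

lemma bot_in[simp]: "bot L \<in> flats L"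
  and bot_le: "x \<in> flats L \<Longrightarrow> lle L (bot L) x"
  unfolding bot_def by (auto intro: Join_least)

lemma top_in[simp]: "top L \<in> flats L"
  and le_top: "x \<in> flats L \<Longrightarrow> lle L x (top L)"
  unfolding top_def by (auto intro: Join_upper)

lemma top_unique: "x \<in> flats L \<Longrightarrow> (\<And>y. y \<in> flats L \<Longrightarrow> lle L y x) \<Longrightarrow> top L = x"
  by (simp add: le_antisym le_top)

lemma bot_unique: "x \<in> flats L \<Longrightarrow> (\<And>y. y \<in> flats L \<Longrightarrow> lle L x y) \<Longrightarrow> bot L = x"
  by (simp add: le_antisym bot_le)

lemma join_le_iff: "x \<in> flats L \<Longrightarrow> y \<in> flats L \<Longrightarrow> w \<in> flats L
    \<Longrightarrow> lle L (join L x y) w \<longleftrightarrow> lle L x w \<and> lle L y w"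
  by (meson join_in join_least join_upper1 join_upper2 le_trans)

lemma le_meet_iff: "x \<in> flats L \<Longrightarrow> y \<in> flats L \<Longrightarrow> w \<in> flats L
    \<Longrightarrow> lle L w (meet L x y) \<longleftrightarrow> lle L w x \<and> lle L w y"
  by (meson meet_in meet_greatest meet_lower1 meet_lower2 le_trans)

lemma eq_if_same_upper_bounds:
  "x \<in> flats L \<Longrightarrow> y \<in> flats L \<Longrightarrow> (\<And>w. w \<in> flats L \<Longrightarrow> lle L x w \<longleftrightarrow> lle L y w) \<Longrightarrow> x = y"
  by (metis le_antisym le_refl)

lemma eq_if_same_lower_bounds:
  "x \<in> flats L \<Longrightarrow> y \<in> flats L \<Longrightarrow> (\<And>w. w \<in> flats L \<Longrightarrow> lle L w x \<longleftrightarrow> lle L w y) \<Longrightarrow> x = y"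
  by (metis le_antisym le_refl)

lemma join_comm: "x \<in> flats L \<Longrightarrow> y \<in> flats L \<Longrightarrow> join L x y = join L y x"
  unfolding join_def by (simp add: insert_commute)

lemma meet_comm: "x \<in> flats L \<Longrightarrow> y \<in> flats L \<Longrightarrow> meet L x y = meet L y x"
  unfolding meet_def by (simp add: insert_commute)

lemma join_assoc: "x \<in> flats L \<Longrightarrow> y \<in> flats L \<Longrightarrow> z \<in> flats L
    \<Longrightarrow> join L (join L x y) z = join L x (join L y z)"
  by (rule eq_if_same_upper_bounds) (auto simp: join_le_iff)

lemma meet_assoc: "x \<in> flats L \<Longrightarrow> y \<in> flats L \<Longrightarrow> z \<in> flats L
    \<Longrightarrow> meet L (meet L x y) z = meet L x (meet L y z)"
  by (rule eq_if_same_lower_bounds) (auto simp: le_meet_iff)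

lemma meet_meet_distrib: "x \<in> flats L \<Longrightarrow> y \<in> flats L \<Longrightarrow> z \<in> flats L
    \<Longrightarrow> meet L (meet L x y) z = meet L (meet L x z) (meet L y z)"
  by (rule eq_if_same_lower_bounds) (auto simp: le_meet_iff)

lemma join_absorb2: "x \<in> flats L \<Longrightarrow> y \<in> flats L \<Longrightarrow> lle L x y \<Longrightarrow> join L x y = y"
  and join_absorb1: "x \<in> flats L \<Longrightarrow> y \<in> flats L \<Longrightarrow> lle L y x \<Longrightarrow> join L x y = x"
  by (rule join_eq; simp)+

lemma meet_absorb1: "x \<in> flats L \<Longrightarrow> y \<in> flats L \<Longrightarrow> lle L x y \<Longrightarrow> meet L x y = x"
  and meet_absorb2: "x \<in> flats L \<Longrightarrow> y \<in> flats L \<Longrightarrow> lle L y x \<Longrightarrow> meet L x y = y"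
  by (rule meet_eq; simp)+

lemma meet_mono: "x \<in> flats L \<Longrightarrow> y \<in> flats L \<Longrightarrow> x' \<in> flats L \<Longrightarrow> y' \<in> flats L
    \<Longrightarrow> lle L x x' \<Longrightarrow> lle L y y' \<Longrightarrow> lle L (meet L x y) (meet L x' y')"
  using le_meet_iff[of x' y' "meet L x y"] le_trans[of "meet L x y" x x'] le_trans[of "meet L x y" y y']
    meet_lower1[of x y] meet_lower2[of x y] by simp

lemma Join_le_iff: "S \<subseteq> flats L \<Longrightarrow> w \<in> flats L \<Longrightarrow> lle L (Join L S) w \<longleftrightarrow> (\<forall>x\<in>S. lle L x w)"
  using Join_least[of S w] Join_upper[of S] le_trans[of _ "Join L S" w] Join_in[of S] by blast

lemma Join_insert:
  assumes "x \<in> flats L" "S \<subseteq> flats L"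
  shows "Join L (insert x S) = join L x (Join L S)"
proof (rule eq_if_same_upper_bounds)
  fix w assume "w \<in> flats L"
  then show "lle L (Join L (insert x S)) w \<longleftrightarrow> lle L (join L x (Join L S)) w"
    using assms Join_le_iff[of "insert x S" w] Join_le_iff[of S w] join_le_iff[of x "Join L S" w] by simp
qed (use assms in simp_all)

text \<open>A flat of \<open>[x, y)\<close> with the fewest flats above it is covered by \<open>y\<close>.\<close>

lemma covers_below_ex:
  assumes "x \<in> flats L" "y \<in> flats L" "lless L x y"
  shows "\<exists>z\<in>flats L. lle L x z \<and> covers L z y"
proof -
  let ?T = "{z \<in> flats L. lle L x z \<and> lless L z y}"
  let ?m = "\<lambda>z. card {w \<in> flats L. lle L z w}"
  have "x \<in> ?T" using assms by auto
  then obtain z where z: "z \<in> ?T" and min: "\<And>w. w \<in> ?T \<Longrightarrow> ?m z \<le> ?m w"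
    using ex_has_least_nat[of "\<lambda>z. z \<in> ?T" x ?m] by blast
  have "\<not> (\<exists>w\<in>flats L. lless L z w \<and> lless L w y)"
  proof
    assume "\<exists>w\<in>flats L. lless L z w \<and> lless L w y"
    then obtain w where w: "w \<in> flats L" "lless L z w" "lless L w y" by blast
    have "lle L x w" using le_trans[of x z w] w z assms unfolding lless_def by blast
    then have wT: "w \<in> ?T" using w by auto
    have "{v \<in> flats L. lle L w v} \<subseteq> {v \<in> flats L. lle L z v}"
      using le_trans[of z w] w z unfolding lless_def by blast
    moreover have "z \<notin> {v \<in> flats L. lle L w v}" using le_antisym[of z w] w z unfolding lless_def by auto
    moreover have "z \<in> {v \<in> flats L. lle L z v}" using z by auto
    ultimately have "{v \<in> flats L. lle L w v} \<subset> {v \<in> flats L. lle L z v}" by blast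
    then have "?m w < ?m z" using finite_flats by (intro psubset_card_mono) auto
    with min[OF wT] show False by linarith
  qed
  then have "covers L z y" using z assms unfolding covers_def by auto
  then show ?thesis using z by blast
qed

lemma card_less_below:
  assumes "x \<in> flats L" "y \<in> flats L" "lless L x y"
  shows "card {w \<in> flats L. lless L w x} < card {w \<in> flats L. lless L w y}"
proof (rule psubset_card_mono)
  show "finite {w \<in> flats L. lless L w y}" using finite_flats by simp
  have "{w \<in> flats L. lless L w x} \<subseteq> {w \<in> flats L. lless L w y}"
    using assms le_trans[of _ x y] le_antisym[of _ y] unfolding lless_def by blast
  moreover have "x \<in> {w \<in> flats L. lless L w y}" "x \<notin> {w \<in> flats L. lless L w x}"
    using assms unfolding lless_def by auto
  ultimately show "{w \<in> flats L. lless L w x} \<subset> {w \<in> flats L. lless L w y}" by blast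
qed

lemma max_chain_covers:
  assumes "max_chain L z n" "covers L z y"
  shows "max_chain L y (Suc n)"
proof -
  obtain xs where xs: "length xs = Suc n" "set xs \<subseteq> flats L" "xs ! 0 = bot L" "xs ! n = z"
    "\<forall>i<n. covers L (xs ! i) (xs ! Suc i)"
    using assms(1) unfolding max_chain_def by blast
  have y: "y \<in> flats L" using assms(2) unfolding covers_def by auto
  let ?ys = "xs @ [y]"
  have "length ?ys = Suc (Suc n)" using xs by simp
  moreover have "set ?ys \<subseteq> flats L" using xs y by auto
  moreover have "?ys ! 0 = bot L" using xs by (simp add: nth_append)
  moreover have "?ys ! Suc n = y" using xs by (simp add: nth_append)
  moreover have "\<forall>i<Suc n. covers L (?ys ! i) (?ys ! Suc i)"
  proof (intro allI impI)
    fix i assume i: "i < Suc n"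
    show "covers L (?ys ! i) (?ys ! Suc i)"
    proof (cases "i < n")
      case True
      then show ?thesis using xs by (simp add: nth_append)
    next
      case False
      then have "i = n" using i by simp
      then show ?thesis using xs assms(2) by (simp add: nth_append)
    qed
  qed
  ultimately show ?thesis unfolding max_chain_def by blast
qed

lemma max_chain_ex: "x \<in> flats L \<Longrightarrow> \<exists>n. max_chain L x n"
proof (induction "card {w \<in> flats L. lless L w x}" arbitrary: x rule: less_induct)
  case less
  show ?case
  proof (cases "x = bot L")
    case True
    then have "max_chain L x 0" unfolding max_chain_def by (intro exI[of _ "[bot L]"]) auto
    then show ?thesis by blast
  next
    case False
    then have "lless L (bot L) x" using bot_le less.prems unfolding lless_def by auto
    then obtain z where z: "z \<in> flats L" "covers L z x"
      using covers_below_ex[of "bot L" x] less.prems by auto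
    then obtain n where "max_chain L z n"
      using less.hyps card_less_below less.prems unfolding covers_def by blast
    then show ?thesis using max_chain_covers z by blast
  qed
qed

lemma max_chain_rank_function:
  assumes "\<rho> (bot L) = 0" "\<And>x y. covers L x y \<Longrightarrow> \<rho> y = Suc (\<rho> x)" "max_chain L x n"
  shows "n = \<rho> x"
proof -
  obtain xs where xs: "length xs = Suc n" "set xs \<subseteq> flats L" "xs ! 0 = bot L" "xs ! n = x"
    "\<forall>i<n. covers L (xs ! i) (xs ! Suc i)"
    using assms(3) unfolding max_chain_def by blast
  have "i \<le> n \<Longrightarrow> \<rho> (xs ! i) = i" for i
  proof (induction i)
    case 0 then show ?case using xs assms(1) by simp
  next
    case (Suc i)
    then have "\<rho> (xs ! i) = i" "covers L (xs ! i) (xs ! Suc i)" using xs(5) by auto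
    then show ?case using assms(2) by simp
  qed
  from this[of n] show ?thesis using xs(4) by simp
qed

lemma rank_function:
  assumes "\<rho> (bot L) = 0" "\<And>x y. covers L x y \<Longrightarrow> \<rho> y = Suc (\<rho> x)"
  shows "ranked L" and "x \<in> flats L \<Longrightarrow> rk L x = \<rho> x"
proof -
  note chain_length = max_chain_rank_function[where \<rho>=\<rho>, OF assms]
  show "ranked L" unfolding ranked_def using chain_length by metis
  assume x: "x \<in> flats L"
  have "max_chain L x (\<rho> x)" using max_chain_ex[OF x] chain_length by metis
  then show "rk L x = \<rho> x" unfolding rk_def using chain_length by blast
qed

end

locale ranked_lattice = fin_lattice +
  assumes is_ranked: "ranked L"
begin

lemma max_chain_rk: "x \<in> flats L \<Longrightarrow> max_chain L x (rk L x)"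
  unfolding rk_def using max_chain_ex is_ranked unfolding ranked_def by (metis theI)

lemma rk_eqI: "x \<in> flats L \<Longrightarrow> max_chain L x n \<Longrightarrow> rk L x = n"
  using max_chain_rk is_ranked unfolding ranked_def by blast

lemma rk_bot[simp]: "rk L (bot L) = 0"
  by (rule rk_eqI) (auto simp: max_chain_def intro!: exI[of _ "[bot L]"])

lemma rk_covers: "covers L x y \<Longrightarrow> rk L y = Suc (rk L x)"
  using rk_eqI max_chain_covers max_chain_rk unfolding covers_def by blast

lemma rk_strict_mono: "x \<in> flats L \<Longrightarrow> y \<in> flats L \<Longrightarrow> lless L x y \<Longrightarrow> rk L x < rk L y"
proof (induction "card {w \<in> flats L. lless L w y}" arbitrary: x y rule: less_induct)
  case less
  obtain z where z: "z \<in> flats L" "lle L x z" "covers L z y"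
    using covers_below_ex less.prems by blast
  have "rk L x \<le> rk L z"
  proof (cases "x = z")
    case False
    then have "lless L x z" "lless L z y" using z unfolding lless_def covers_def by auto
    then show ?thesis using less.hyps[OF card_less_below] z less.prems by fastforce
  qed simp
  then show ?case using rk_covers[OF z(3)] by simp
qed

lemma rk_mono: "x \<in> flats L \<Longrightarrow> y \<in> flats L \<Longrightarrow> lle L x y \<Longrightarrow> rk L x \<le> rk L y"
  using rk_strict_mono[of x y] unfolding lless_def by fastforce

lemma eq_if_rk_le: "x \<in> flats L \<Longrightarrow> y \<in> flats L \<Longrightarrow> lle L x y \<Longrightarrow> rk L y \<le> rk L x \<Longrightarrow> x = y"
  using rk_strict_mono[of x y] unfolding lless_def by fastforce

lemma rk_eq_0_imp_bot: "x \<in> flats L \<Longrightarrow> rk L x = 0 \<Longrightarrow> x = bot L"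
  using eq_if_rk_le[of "bot L" x] bot_le by simp

end

locale geom_lattice =
  fixes L :: "'a lat"
  assumes geometric: "geometric_lattice L"
begin

sublocale ranked_lattice L
  using geometric unfolding geometric_lattice_def by unfold_locales auto

lemma rk_semimodular: "x \<in> flats L \<Longrightarrow> y \<in> flats L
    \<Longrightarrow> rk L (meet L x y) + rk L (join L x y) \<le> rk L x + rk L y"
  using geometric unfolding geometric_lattice_def semimodular_def by blast

lemma atomic_Join: "x \<in> flats L \<Longrightarrow> \<exists>S\<subseteq>atoms L. x = Join L S"
  using geometric unfolding geometric_lattice_def atomic_def by blast

lemma atom_in_flats: "p \<in> atoms L \<Longrightarrow> p \<in> flats L"
  and rk_atom: "p \<in> atoms L \<Longrightarrow> rk L p = 1"
  unfolding atoms_def by auto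

lemma meet_atom_not_le:
  assumes "p \<in> atoms L" "x \<in> flats L" "\<not> lle L p x"
  shows "meet L x p = bot L"
proof -
  have p: "p \<in> flats L" using assms atom_in_flats by auto
  have "meet L x p \<noteq> p" using meet_lower1[OF assms(2) p] assms(3) by auto
  then have "lless L (meet L x p) p" using meet_lower2[OF assms(2) p] unfolding lless_def by auto
  then have "rk L (meet L x p) < 1" using rk_strict_mono[of "meet L x p" p] assms p rk_atom by auto
  then show ?thesis using rk_eq_0_imp_bot[of "meet L x p"] assms p by auto
qed

lemma rk_join_atom:
  assumes "p \<in> atoms L" "x \<in> flats L" "\<not> lle L p x"
  shows "rk L (join L x p) = Suc (rk L x)"
proof -
  have p: "p \<in> flats L" using assms atom_in_flats by auto
  have "rk L (meet L x p) + rk L (join L x p) \<le> rk L x + rk L p" using rk_semimodular[OF assms(2) p] .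
  then have a: "rk L (join L x p) \<le> Suc (rk L x)"
    using meet_atom_not_le[OF assms] rk_atom[OF assms(1)] by simp
  have "join L x p \<noteq> x" using join_upper2[OF assms(2) p] assms(3) by auto
  then have "lless L x (join L x p)" using join_upper1[OF assms(2) p] unfolding lless_def by auto
  then have "rk L x < rk L (join L x p)" using rk_strict_mono assms p by simp
  then show ?thesis using a by simp
qed

lemma atom_below_not_le:
  assumes "x \<in> flats L" "y \<in> flats L" "lle L x y" "x \<noteq> y"
  shows "\<exists>p\<in>atoms L. lle L p y \<and> \<not> lle L p x"
proof (rule ccontr)
  assume c: "\<not> (\<exists>p\<in>atoms L. lle L p y \<and> \<not> lle L p x)"
  obtain S where S: "S \<subseteq> atoms L" "y = Join L S" using atomic_Join[OF assms(2)] by blast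
  have Sf: "S \<subseteq> flats L" using S atom_in_flats by auto
  have "\<And>p. p \<in> S \<Longrightarrow> lle L p x" using c S Join_upper[OF Sf] by blast
  then have "lle L y x" using S Join_least[OF Sf assms(1)] by simp
  then show False using le_antisym assms by blast
qed

lemma covers_join_atom:
  assumes "covers L x y"
  shows "\<exists>p\<in>atoms L. y = join L x p \<and> \<not> lle L p x"
proof -
  have xy: "x \<in> flats L" "y \<in> flats L" "lle L x y" "x \<noteq> y" using assms
    unfolding covers_def lless_def by auto
  obtain p where p: "p \<in> atoms L" "lle L p y" "\<not> lle L p x" using atom_below_not_le[OF xy] by blast
  have pf: "p \<in> flats L" using p atom_in_flats by auto
  have le: "lle L (join L x p) y" using join_least[OF xy(1) pf xy(2) xy(3) p(2)] .
  have "rk L (join L x p) = Suc (rk L x)" using rk_join_atom p xy by simp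
  also have "\<dots> = rk L y" using rk_covers[OF assms] by simp
  finally have "join L x p = y" using eq_if_rk_le[OF _ xy(2) le] xy pf by simp
  then show ?thesis using p by auto
qed

lemma modular_flat_in: "modular_flat L F \<Longrightarrow> F \<in> flats L"
  unfolding modular_flat_def by auto

lemma modular_flat_rk: "modular_flat L F \<Longrightarrow> G \<in> flats L
    \<Longrightarrow> rk L (meet L F G) + rk L (join L F G) = rk L F + rk L G"
  unfolding modular_flat_def by blast

lemma modular_flat_rk': "modular_flat L F \<Longrightarrow> G \<in> flats L
    \<Longrightarrow> rk L (meet L G F) + rk L (join L G F) = rk L F + rk L G"
  using modular_flat_rk meet_comm join_comm modular_flat_in by metis

lemma modular_flat_top: "modular_flat L (top L)"
  unfolding modular_flat_def by (simp add: meet_absorb2 join_absorb1 le_top)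

text \<open>The inequality \<open>\<ge>\<close> is clear; both sides have the same rank by modularity of \<open>F\<close> and
  semimodularity.\<close>

lemma modular_law:
  assumes F: "modular_flat L F" and c: "c \<in> flats L" "lle L c F" and J: "J \<in> flats L"
  shows "meet L (join L J c) F = join L (meet L J F) c"
proof -
  have Ff: "F \<in> flats L" using modular_flat_in[OF F] .
  define z where "z = meet L (join L J c) F"
  define y where "y = join L (meet L J F) c"
  have Jc: "join L J c \<in> flats L" and JF: "meet L J F \<in> flats L" using J c Ff by auto
  have zf: "z \<in> flats L" and yf: "y \<in> flats L" unfolding z_def y_def using Jc JF c Ff by auto
  have "lle L (meet L J F) (join L J c)"
    using le_trans[OF JF J Jc meet_lower1[OF J Ff] join_upper1[OF J c(1)]] .
  moreover have "lle L (meet L J F) F" using meet_lower2[OF J Ff] .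
  ultimately have m1: "lle L (meet L J F) z" unfolding z_def using le_meet_iff[OF Jc Ff JF] by simp
  have m2: "lle L c z" unfolding z_def
    using le_meet_iff[OF Jc Ff c(1)] join_upper2[OF J c(1)] c(2) by simp
  have yz: "lle L y z" unfolding y_def using join_least[OF JF c(1) zf m1 m2] .
  have jJF: "join L (join L J c) F = join L J F"
    using join_assoc[OF J c(1) Ff] join_absorb2[OF c(1) Ff c(2)] by simp
  have r1: "rk L z + rk L (join L J F) = rk L F + rk L (join L J c)"
    using modular_flat_rk'[OF F Jc] jJF unfolding z_def by simp
  have r2: "rk L (meet L J F) + rk L (join L J F) = rk L F + rk L J" using modular_flat_rk'[OF F J] .
  have jJy: "join L J y = join L J c"
  proof -
    have "join L J y = join L (join L J (meet L J F)) c" unfolding y_def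
      using join_assoc[OF J JF c(1)] by simp
    also have "join L J (meet L J F) = J" using join_absorb1[OF J JF meet_lower1[OF J Ff]] .
    finally show ?thesis .
  qed
  have "lle L (meet L J F) (meet L J y)"
    using le_meet_iff[OF J yf JF] meet_lower1[OF J Ff] join_upper1[OF JF c(1)] unfolding y_def by simp
  then have "rk L (meet L J F) \<le> rk L (meet L J y)" using rk_mono JF J yf by simp
  moreover have "rk L (meet L J y) + rk L (join L J c) \<le> rk L J + rk L y"
    using rk_semimodular[OF J yf] jJy by simp
  ultimately have "rk L z \<le> rk L y" using r1 r2 by linarith
  then have "y = z" using eq_if_rk_le[OF yf zf yz] by simp
  then show ?thesis unfolding y_def z_def by simp
qed

lemma modular_rk_join:
  assumes F: "modular_flat L F" and c: "c \<in> flats L" "lle L c F" and J: "J \<in> flats L"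
  shows "rk L (join L J c) + rk L (meet L J F) = rk L J + rk L (join L (meet L J F) c)"
proof -
  have Ff: "F \<in> flats L" using modular_flat_in[OF F] .
  have Jc: "join L J c \<in> flats L" using J c by auto
  have jJF: "join L (join L J c) F = join L J F"
    using join_assoc[OF J c(1) Ff] join_absorb2[OF c(1) Ff c(2)] by simp
  have r1: "rk L (meet L (join L J c) F) + rk L (join L J F) = rk L F + rk L (join L J c)"
    using modular_flat_rk'[OF F Jc] jJF by simp
  have r2: "rk L (meet L J F) + rk L (join L J F) = rk L F + rk L J" using modular_flat_rk'[OF F J] .
  have r1': "rk L (join L (meet L J F) c) + rk L (join L J F) = rk L F + rk L (join L J c)"
    using r1 modular_law[OF F c J] by simp
  show ?thesis using r1' r2 by linarith
qed

text \<open>With \<open>b = Y \<and> F\<close>: modularity of \<open>F\<close> computes the ranks involving \<open>X \<or> b\<close>, and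
  semimodularity is applied to \<open>X \<or> b\<close> and \<open>Y\<close>, whose join is \<open>X \<or> Y\<close>.\<close>

lemma modular_semimodular_ineq:
  assumes F: "modular_flat L F" and X: "X \<in> flats L" and Y: "Y \<in> flats L"
  shows "rk L (meet L (join L X Y) F) + rk L (join L (join L X Y) F) + rk L (join L (meet L X Y) F)
     \<le> rk L (join L X F) + rk L (join L Y F) + rk L (join L (meet L X F) (meet L Y F))"
proof -
  have Ff: "F \<in> flats L" using modular_flat_in[OF F] .
  define b where "b = meet L Y F"
  define j where "j = join L X Y"
  define m where "m = meet L X Y"
  have bf: "b \<in> flats L" and jf: "j \<in> flats L" and mf: "m \<in> flats L"
    unfolding b_def j_def m_def using X Y Ff by auto
  have bF: "lle L b F" and bY: "lle L b Y" unfolding b_def using meet_lower1 meet_lower2 Y Ff by auto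
  have Xb: "join L X b \<in> flats L" using X bf by simp
  have f1j: "rk L (meet L j F) + rk L (join L j F) = rk L F + rk L j" using modular_flat_rk'[OF F jf] .
  have mmF: "meet L m F = meet L X b" unfolding m_def b_def using meet_assoc X Y Ff by simp
  have f1m: "rk L (meet L X b) + rk L (join L m F) = rk L F + rk L m"
    using modular_flat_rk'[OF F mf] mmF by simp
  have f1Y: "rk L b + rk L (join L Y F) = rk L F + rk L Y"
    using modular_flat_rk'[OF F Y] unfolding b_def by simp
  have f2: "meet L (join L X b) F = join L (meet L X F) b" using modular_law[OF F bf bF X] .
  have f2': "join L (join L X b) F = join L X F"
    using join_assoc[OF X bf Ff] join_absorb2[OF bf Ff bF] by simp
  have f1Xb: "rk L (join L (meet L X F) b) + rk L (join L X F) = rk L F + rk L (join L X b)"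
    using modular_flat_rk'[OF F Xb] f2 f2' by simp
  have jXbY: "join L (join L X b) Y = j" unfolding j_def
    using join_assoc[OF X bf Y] join_absorb2[OF bf Y bY] by simp
  have f3: "rk L (meet L (join L X b) Y) + rk L j \<le> rk L (join L X b) + rk L Y"
    using rk_semimodular[OF Xb Y] jXbY by simp
  have Xbf: "meet L X b \<in> flats L" using X bf by simp
  have mXb: "lle L (meet L X b) b" using meet_lower2 X bf by simp
  have f4: "rk L (join L m b) + rk L (meet L X b) = rk L m + rk L b"
    using modular_rk_join[OF F bf bF mf] mmF join_absorb2[OF Xbf bf mXb] by simp
  have mle: "lle L (join L m b) (meet L (join L X b) Y)"
  proof (rule join_least[OF mf bf])
    show "meet L (join L X b) Y \<in> flats L" using Xb Y by simp
    have "lle L m (join L X b)"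
      using le_trans[OF mf X Xb] meet_lower1[OF X Y] join_upper1[OF X bf] unfolding m_def by simp
    moreover have "lle L m Y" using meet_lower2[OF X Y] unfolding m_def .
    ultimately show "lle L m (meet L (join L X b) Y)" using le_meet_iff[OF Xb Y mf] by simp
    show "lle L b (meet L (join L X b) Y)" using le_meet_iff[OF Xb Y bf] join_upper2[OF X bf] bY by simp
  qed
  have f5: "rk L (join L m b) \<le> rk L (meet L (join L X b) Y)" using rk_mono[OF _ _ mle] mf bf Xb Y by simp
  show ?thesis unfolding j_def[symmetric] m_def[symmetric] b_def[symmetric]
    using f1j f1m f1Y f1Xb f3 f4 f5 by linarith
qed

end

locale lattice_embedding = src: geom_lattice E + tgt: geom_lattice E'
  for E :: "'a lat" and E' :: "'b lat" +
  fixes \<phi> :: "'a \<Rightarrow> 'b"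
  assumes is_embedding: "embedding E E' \<phi>"
begin

lemma emb_in[simp]: "x \<in> flats E \<Longrightarrow> \<phi> x \<in> flats E'"
  and emb_inj: "inj_on \<phi> (flats E)"
  and emb_mono: "x \<in> flats E \<Longrightarrow> y \<in> flats E \<Longrightarrow> lle E x y \<Longrightarrow> lle E' (\<phi> x) (\<phi> y)"
  and emb_Join: "S \<subseteq> flats E \<Longrightarrow> \<phi> (Join E S) = Join E' (\<phi> ` S)"
  and emb_atom: "x \<in> atoms E \<Longrightarrow> \<phi> x \<in> atoms E'"
  using is_embedding unfolding embedding_def by auto

lemma emb_eq_iff: "x \<in> flats E \<Longrightarrow> y \<in> flats E \<Longrightarrow> \<phi> x = \<phi> y \<longleftrightarrow> x = y"
  using emb_inj unfolding inj_on_def by blast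

lemma emb_join: "x \<in> flats E \<Longrightarrow> y \<in> flats E \<Longrightarrow> \<phi> (join E x y) = join E' (\<phi> x) (\<phi> y)"
  unfolding join_def using emb_Join[of "{x, y}"] by simp

lemma emb_bot[simp]: "\<phi> (bot E) = bot E'"
  unfolding bot_def using emb_Join[of "{}"] by simp

lemma emb_le_iff: "x \<in> flats E \<Longrightarrow> y \<in> flats E \<Longrightarrow> lle E' (\<phi> x) (\<phi> y) \<longleftrightarrow> lle E x y"
proof
  assume xy: "x \<in> flats E" "y \<in> flats E" "lle E' (\<phi> x) (\<phi> y)"
  then have "\<phi> (join E x y) = \<phi> y" using emb_join tgt.join_absorb2 by simp
  then have "join E x y = y" using emb_eq_iff xy by simp
  then show "lle E x y" using src.join_upper1 xy by metis
qed (rule emb_mono)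

text \<open>Every flat is reached from the bottom by adding atoms one at a time, and each step
  raises the rank by one on both sides.\<close>

lemma emb_rk: "x \<in> flats E \<Longrightarrow> rk E' (\<phi> x) = rk E x"
proof (induction "rk E x" arbitrary: x)
  case 0
  then show ?case using src.rk_eq_0_imp_bot by fastforce
next
  case (Suc n)
  then have "lless E (bot E) x" using src.bot_le unfolding lless_def by fastforce
  then obtain z where z: "z \<in> flats E" "covers E z x"
    using src.covers_below_ex[OF src.bot_in Suc.prems] by blast
  obtain p where p: "p \<in> atoms E" "x = join E z p" "\<not> lle E p z"
    using src.covers_join_atom[OF z(2)] by blast
  have pf: "p \<in> flats E" using p src.atom_in_flats by simp
  have "rk E' (\<phi> x) = Suc (rk E' (\<phi> z))"
    using tgt.rk_join_atom[OF emb_atom[OF p(1)]] emb_join emb_le_iff pf z p by simp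
  then show ?case using Suc src.rk_covers[OF z(2)] z by simp
qed

end

section \<open>Modular extensions\<close>

locale mod_ext =
  fixes L :: "'a lat" and E :: "nat lat" and i :: "'a \<Rightarrow> nat"
  assumes L_geometric: "geometric_lattice L" and is_mod_ext: "modular_extension L E i"
begin

sublocale L: geom_lattice L using L_geometric by unfold_locales
sublocale E: geom_lattice E using is_mod_ext unfolding modular_extension_def by unfold_locales auto
sublocale i: lattice_embedding L E i
  using is_mod_ext unfolding modular_extension_def by unfold_locales auto

definition Fi where "Fi = F_iota L i"

lemma Fi_eq: "Fi = i (top L)"
  unfolding Fi_def F_iota_def by simp

lemma Fi_in[simp]: "Fi \<in> flats E"
  using Fi_eq by simp

lemma i_le_Fi: "a \<in> flats L \<Longrightarrow> lle E (i a) Fi"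
  unfolding Fi_eq using i.emb_mono L.le_top by simp

text \<open>The modular flat in the definition of a modular extension is necessarily \<open>Fi\<close>.\<close>

lemma i_image: "i ` flats L = interval E (bot E) Fi" and Fi_modular: "modular_flat E Fi"
proof -
  obtain F where F: "modular_flat E F" "i ` flats L = interval E (bot E) F"
    using is_mod_ext unfolding modular_extension_def by blast
  have Ff: "F \<in> flats E" using E.modular_flat_in F by auto
  have "F \<in> interval E (bot E) F" unfolding interval_def using Ff E.bot_le by auto
  then obtain a where a: "a \<in> flats L" "F = i a" using F by auto
  have "i (top L) \<in> interval E (bot E) F" using F(2) by auto
  then have "lle E Fi F" unfolding interval_def Fi_eq by auto
  moreover have "lle E F Fi" using a i_le_Fi by simp
  ultimately have "F = Fi" using E.le_antisym Ff by simp
  then show "i ` flats L = interval E (bot E) Fi" "modular_flat E Fi" using F by auto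
qed

lemma below_Fi: "x \<in> flats E \<Longrightarrow> lle E x Fi \<Longrightarrow> \<exists>a\<in>flats L. x = i a"
  using i_image E.bot_le unfolding interval_def by (metis (no_types, lifting) image_iff mem_Collect_eq)

definition restr :: "nat \<Rightarrow> 'a" where
  "restr x = inv_into (flats L) i (meet E x Fi)"

lemma restr_in[simp]: "x \<in> flats E \<Longrightarrow> restr x \<in> flats L"
  and i_restr: "x \<in> flats E \<Longrightarrow> i (restr x) = meet E x Fi"
proof -
  assume x: "x \<in> flats E"
  obtain a where a: "a \<in> flats L" "meet E x Fi = i a"
    using below_Fi[of "meet E x Fi"] x E.meet_lower2 by auto
  then show "restr x \<in> flats L" "i (restr x) = meet E x Fi" unfolding restr_def
    using inv_into_into[of "i a" i "flats L"] f_inv_into_f[of "i a" i "flats L"] by auto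
qed

lemma restr_i[simp]: "a \<in> flats L \<Longrightarrow> restr (i a) = a"
  unfolding restr_def using E.meet_absorb1 i_le_Fi inv_into_f_f[OF i.emb_inj] by simp

lemma restr_bot: "restr (bot E) = bot L"
  using restr_i[of "bot L"] by simp

lemma restr_mono: "x \<in> flats E \<Longrightarrow> y \<in> flats E \<Longrightarrow> lle E x y \<Longrightarrow> lle L (restr x) (restr y)"
  using i.emb_le_iff[of "restr x" "restr y"] i_restr E.meet_mono[of x Fi y Fi] by simp

lemma i_restr_le: "x \<in> flats E \<Longrightarrow> lle E (i (restr x)) x"
  using i_restr E.meet_lower1 by simp

lemma restr_ge_Fi: "x \<in> flats E \<Longrightarrow> lle E Fi x \<Longrightarrow> restr x = top L"
  using i_restr[of x] E.meet_absorb2[of x Fi] i.emb_eq_iff[of "restr x" "top L"] unfolding Fi_eq by simp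

lemma i_meet: "a \<in> flats L \<Longrightarrow> b \<in> flats L \<Longrightarrow> i (meet L a b) = meet E (i a) (i b)"
proof -
  assume ab: "a \<in> flats L" "b \<in> flats L"
  have mf: "meet E (i a) (i b) \<in> flats E" using ab by simp
  have "lle E (meet E (i a) (i b)) Fi" using E.le_trans[OF mf _ Fi_in E.meet_lower1 i_le_Fi] ab by simp
  then obtain d where d: "d \<in> flats L" "meet E (i a) (i b) = i d" using below_Fi mf by blast
  have "lle L d a" "lle L d b"
    using d E.meet_lower1[of "i a" "i b"] E.meet_lower2[of "i a" "i b"] ab i.emb_le_iff by auto
  then have "lle L d (meet L a b)" using L.meet_greatest ab d by simp
  then have 1: "lle E (meet E (i a) (i b)) (i (meet L a b))" using d i.emb_mono ab by simp
  have 2: "lle E (i (meet L a b)) (meet E (i a) (i b))"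
    using E.meet_greatest[of "i a" "i b"] i.emb_mono L.meet_lower1 L.meet_lower2 ab by simp
  show ?thesis using E.le_antisym 1 2 ab by simp
qed

lemma restr_meet:
  assumes "x \<in> flats E" "y \<in> flats E"
  shows "restr (meet E x y) = meet L (restr x) (restr y)"
proof -
  have "i (restr (meet E x y)) = meet E (meet E x y) Fi" using i_restr assms by simp
  also have "\<dots> = meet E (meet E x Fi) (meet E y Fi)" by (rule E.meet_meet_distrib[OF assms Fi_in])
  also have "\<dots> = i (meet L (restr x) (restr y))" using i_meet i_restr assms by simp
  finally show ?thesis using i.emb_eq_iff assms by simp
qed

lemma rk_restr: "x \<in> flats E \<Longrightarrow> rk L (restr x) + rk E (join E x Fi) = rk E x + rk E Fi"
  using E.modular_flat_rk'[OF Fi_modular, of x] i.emb_rk[of "restr x"] i_restr by simp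

lemma rk_restr_le: "x \<in> flats E \<Longrightarrow> rk L (restr x) \<le> rk E x"
  using E.rk_mono[of "i (restr x)" x] i_restr_le i.emb_rk by simp

lemma restr_join_i:
  assumes "x \<in> flats E" "A \<in> flats L" "lle L (restr x) A"
  shows "restr (join E x (i A)) = A"
proof -
  have "i (restr (join E x (i A))) = meet E (join E x (i A)) Fi" using i_restr assms by simp
  also have "\<dots> = join E (meet E x Fi) (i A)" using E.modular_law[OF Fi_modular _ i_le_Fi] assms by simp
  also have "\<dots> = join E (i (restr x)) (i A)" using i_restr assms by simp
  also have "\<dots> = i A" using i.emb_join[symmetric] L.join_absorb2 assms by simp
  finally show ?thesis using i.emb_eq_iff assms by simp
qed

lemma rk_join_i:
  assumes "x \<in> flats E" "A \<in> flats L" "lle L (restr x) A"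
  shows "rk E (join E x (i A)) + rk L (restr x) = rk E x + rk L A"
proof -
  have "rk E (join E x (i A)) + rk E (meet E x Fi) = rk E x + rk E (join E (meet E x Fi) (i A))"
    using E.modular_rk_join[OF Fi_modular _ i_le_Fi] assms by simp
  moreover have "meet E x Fi = i (restr x)" using i_restr assms by simp
  moreover have "join E (i (restr x)) (i A) = i A"
    using i.emb_join[symmetric] L.join_absorb2 assms by simp
  ultimately show ?thesis using i.emb_rk assms by simp
qed

lemma i_le_iff_le_restr: "a \<in> flats L \<Longrightarrow> x \<in> flats E \<Longrightarrow> lle E (i a) x \<longleftrightarrow> lle L a (restr x)"
  using E.le_meet_iff[of x Fi "i a"] i_le_Fi i_restr[of x] i.emb_le_iff[of a "restr x"] by simp

lemma cover_with_same_restr: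
  assumes x: "x \<in> flats E" and y: "y \<in> flats E" and "lle E x y" "x \<noteq> y" "restr x = restr y"
  obtains z where "z \<in> flats E" "lle E x z" "lle E z y" "restr z = restr x" "rk E z = Suc (rk E x)"
proof -
  obtain p where p: "p \<in> atoms E" "lle E p y" "\<not> lle E p x" using E.atom_below_not_le assms by blast
  have pf: "p \<in> flats E" using p E.atom_in_flats by simp
  define z where "z = join E x p"
  have zf: "z \<in> flats E" and xz: "lle E x z" and zy: "lle E z y"
    unfolding z_def using E.join_upper1 E.join_least pf assms p by auto
  have "restr z = restr x"
    using restr_mono[OF x zf xz] restr_mono[OF zf y zy] assms zf L.le_antisym by simp
  moreover have "rk E z = Suc (rk E x)" unfolding z_def using E.rk_join_atom p x by simp
  ultimately show ?thesis using that zf xz zy by blast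
qed

lemma join_i_between:
  assumes x: "x \<in> flats E" and y: "y \<in> flats E" "lle E x y"
    and A: "A \<in> flats L" "lle L (restr x) A" "lle L A (restr y)"
  shows "lle E x (join E x (i A))" and "lle E (join E x (i A)) y" and "restr (join E x (i A)) = A"
    and "rk E (join E x (i A)) + rk L (restr x) = rk E x + rk L A"
  using E.join_upper1 E.join_least i_le_iff_le_restr restr_join_i rk_join_i assms by auto

lemma rk_join_Fi_semimodular:
  assumes x: "x \<in> flats E" and y: "y \<in> flats E"
  shows "rk L (restr (join E x y)) + rk E (join E (join E x y) Fi) + rk E (join E (meet E x y) Fi)
     \<le> rk E (join E x Fi) + rk E (join E y Fi) + rk L (join L (restr x) (restr y))"
proof -
  have "meet E (join E x y) Fi = i (restr (join E x y))" using i_restr x y by simp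
  moreover have "join E (meet E x Fi) (meet E y Fi) = i (join L (restr x) (restr y))"
    using i_restr i.emb_join x y by simp
  ultimately show ?thesis using E.modular_semimodular_ineq[OF Fi_modular x y] i.emb_rk x y by simp
qed

end

section \<open>The pushout of two modular extensions\<close>

abbreviation pe :: "nat \<Rightarrow> nat \<Rightarrow> nat" where "pe a b \<equiv> prod_encode (a, b)"

lemma pe_eq[simp]: "pe a b = pe a' b' \<longleftrightarrow> a = a' \<and> b = b'"
  by (simp add: prod_encode_eq)

lemma pe_surj: "\<exists>a b. X = pe a b"
  by (metis prod_decode_inverse surj_pair)

locale pushout_ext = m1: mod_ext L E1 i1 + m2: mod_ext L E2 i2
  for L :: "'a lat" and E1 i1 E2 i2
begin

abbreviation P where "P \<equiv> pushout L E1 i1 E2 i2"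

definition in_P :: "nat \<Rightarrow> nat \<Rightarrow> bool" where
  "in_P a b \<longleftrightarrow> a \<in> flats E1 \<and> b \<in> flats E2 \<and> m1.restr a = m2.restr b"

lemma P_flats: "pe a b \<in> flats P \<longleftrightarrow> in_P a b"
  unfolding pushout_def in_P_def m1.restr_def m2.restr_def m1.Fi_def m2.Fi_def
  by (simp add: inj_image_mem_iff[OF inj_prod_encode])

lemma P_le[simp]: "lle P (pe a b) (pe a' b') \<longleftrightarrow> lle E1 a a' \<and> lle E2 b b'"
  unfolding pushout_def by simp

lemma P_cases: "X \<in> flats P \<Longrightarrow> (\<And>a b. X = pe a b \<Longrightarrow> in_P a b \<Longrightarrow> thesis) \<Longrightarrow> thesis"
  using pe_surj P_flats by metis

lemma in_P_D: "in_P a b \<Longrightarrow> a \<in> flats E1" "in_P a b \<Longrightarrow> b \<in> flats E2"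
  "in_P a b \<Longrightarrow> m1.restr a = m2.restr b"
  unfolding in_P_def by auto

lemma in_P_i: "a \<in> flats L \<Longrightarrow> in_P (i1 a) (i2 a)"
  unfolding in_P_def by simp

lemma in_P_ge_Fi: "x1 \<in> flats E1 \<Longrightarrow> x2 \<in> flats E2 \<Longrightarrow> lle E1 m1.Fi x1 \<Longrightarrow> lle E2 m2.Fi x2 \<Longrightarrow> in_P x1 x2"
  unfolding in_P_def using m1.restr_ge_Fi m2.restr_ge_Fi by simp

lemma P_finite: "finite (flats P)"
proof -
  have "flats P \<subseteq> prod_encode ` (flats E1 \<times> flats E2)" unfolding pushout_def by auto
  then show ?thesis using m1.E.finite_flats m2.E.finite_flats finite_subset by blast
qed

text \<open>The join of \<open>(x1, x2)\<close> and \<open>(y1, y2)\<close> is the componentwise join, enlarged by the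
  image of the join \<open>C\<close> of the two restrictions so that the restrictions agree again.\<close>

definition restr_join :: "nat \<Rightarrow> nat \<Rightarrow> 'a" where
  "restr_join j1 j2 = join L (m1.restr j1) (m2.restr j2)"

definition P_join1 :: "nat \<Rightarrow> nat \<Rightarrow> nat \<Rightarrow> nat \<Rightarrow> nat" where
  "P_join1 x1 x2 y1 y2 = join E1 (join E1 x1 y1) (i1 (restr_join (join E1 x1 y1) (join E2 x2 y2)))"

definition P_join2 :: "nat \<Rightarrow> nat \<Rightarrow> nat \<Rightarrow> nat \<Rightarrow> nat" where
  "P_join2 x1 x2 y1 y2 = join E2 (join E2 x2 y2) (i2 (restr_join (join E1 x1 y1) (join E2 x2 y2)))"

lemma restr_join_in: "j1 \<in> flats E1 \<Longrightarrow> j2 \<in> flats E2 \<Longrightarrow> restr_join j1 j2 \<in> flats L"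
  unfolding restr_join_def by simp

lemma in_P_join_restr_join:
  assumes "j1 \<in> flats E1" "j2 \<in> flats E2"
  shows "in_P (join E1 j1 (i1 (restr_join j1 j2))) (join E2 j2 (i2 (restr_join j1 j2)))"
  unfolding in_P_def using assms m1.restr_join_i m2.restr_join_i m1.L.join_upper1 m1.L.join_upper2
  by (simp add: restr_join_def)

lemma join_restr_join_least:
  assumes w: "in_P w1 w2" and j: "j1 \<in> flats E1" "j2 \<in> flats E2" "lle E1 j1 w1" "lle E2 j2 w2"
  shows "lle E1 (join E1 j1 (i1 (restr_join j1 j2))) w1 \<and> lle E2 (join E2 j2 (i2 (restr_join j1 j2))) w2"
proof -
  note wf = in_P_D[OF w]
  have "lle L (m1.restr j1) (m1.restr w1)" "lle L (m2.restr j2) (m2.restr w2)"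
    using m1.restr_mono[of j1 w1] m2.restr_mono[of j2 w2] wf j by auto
  then have "lle L (restr_join j1 j2) (m1.restr w1)" "lle L (restr_join j1 j2) (m2.restr w2)"
    unfolding restr_join_def using m1.L.join_least wf j by auto
  then show ?thesis
    using m1.E.join_least m2.E.join_least m1.i_le_iff_le_restr m2.i_le_iff_le_restr restr_join_in wf j
    by simp
qed

lemma P_is_lub:
  assumes x: "in_P x1 x2" and y: "in_P y1 y2"
  shows "in_P (P_join1 x1 x2 y1 y2) (P_join2 x1 x2 y1 y2)"
    and "is_lub P {pe x1 x2, pe y1 y2} (pe (P_join1 x1 x2 y1 y2) (P_join2 x1 x2 y1 y2))"
proof -
  note xf = in_P_D[OF x] and yf = in_P_D[OF y]
  define j1 where "j1 = join E1 x1 y1"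
  define j2 where "j2 = join E2 x2 y2"
  have j: "j1 \<in> flats E1" "j2 \<in> flats E2" unfolding j1_def j2_def using xf yf by auto
  have p: "P_join1 x1 x2 y1 y2 = join E1 j1 (i1 (restr_join j1 j2))"
    "P_join2 x1 x2 y1 y2 = join E2 j2 (i2 (restr_join j1 j2))"
    unfolding P_join1_def P_join2_def j1_def j2_def by simp_all
  show in_join: "in_P (P_join1 x1 x2 y1 y2) (P_join2 x1 x2 y1 y2)"
    unfolding p using in_P_join_restr_join[OF j] .
  have "lle E1 j1 (P_join1 x1 x2 y1 y2)" "lle E2 j2 (P_join2 x1 x2 y1 y2)"
    unfolding p using m1.E.join_upper1 m2.E.join_upper1 restr_join_in j by auto
  then have ub: "lle E1 x1 (P_join1 x1 x2 y1 y2)" "lle E1 y1 (P_join1 x1 x2 y1 y2)"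
    "lle E2 x2 (P_join2 x1 x2 y1 y2)" "lle E2 y2 (P_join2 x1 x2 y1 y2)"
    unfolding j1_def j2_def using m1.E.join_le_iff m2.E.join_le_iff xf yf in_P_D[OF in_join] by auto
  show "is_lub P {pe x1 x2, pe y1 y2} (pe (P_join1 x1 x2 y1 y2) (P_join2 x1 x2 y1 y2))"
    unfolding is_lub_def
  proof (intro conjI ballI impI)
    show "pe (P_join1 x1 x2 y1 y2) (P_join2 x1 x2 y1 y2) \<in> flats P" using in_join P_flats by simp
  next
    fix X assume "X \<in> {pe x1 x2, pe y1 y2}"
    then show "lle P X (pe (P_join1 x1 x2 y1 y2) (P_join2 x1 x2 y1 y2))" using ub by auto
  next
    fix W assume W: "W \<in> flats P" "\<forall>X\<in>{pe x1 x2, pe y1 y2}. lle P X W"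
    obtain w1 w2 where w: "W = pe w1 w2" "in_P w1 w2" using W(1) P_cases by blast
    have "lle E1 j1 w1" "lle E2 j2 w2"
      using W(2) w in_P_D[OF w(2)] xf yf m1.E.join_least m2.E.join_least unfolding j1_def j2_def by auto
    then show "lle P (pe (P_join1 x1 x2 y1 y2) (P_join2 x1 x2 y1 y2)) W"
      using join_restr_join_least[OF w(2) j] w p by simp
  qed
qed

lemma P_is_glb:
  assumes x: "in_P x1 x2" and y: "in_P y1 y2"
  shows "in_P (meet E1 x1 y1) (meet E2 x2 y2)"
    and "is_glb P {pe x1 x2, pe y1 y2} (pe (meet E1 x1 y1) (meet E2 x2 y2))"
proof -
  note xf = in_P_D[OF x] and yf = in_P_D[OF y]
  show in_meet: "in_P (meet E1 x1 y1) (meet E2 x2 y2)" unfolding in_P_def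
    using m1.restr_meet[OF xf(1) yf(1)] m2.restr_meet[OF xf(2) yf(2)] xf yf by simp
  show "is_glb P {pe x1 x2, pe y1 y2} (pe (meet E1 x1 y1) (meet E2 x2 y2))"
    unfolding is_glb_def
  proof (intro conjI ballI impI)
    show "pe (meet E1 x1 y1) (meet E2 x2 y2) \<in> flats P" using in_meet P_flats by simp
  next
    fix X assume "X \<in> {pe x1 x2, pe y1 y2}"
    then show "lle P (pe (meet E1 x1 y1) (meet E2 x2 y2)) X"
      using m1.E.meet_lower1 m1.E.meet_lower2 m2.E.meet_lower1 m2.E.meet_lower2 xf yf by auto
  next
    fix W assume W: "W \<in> flats P" "\<forall>X\<in>{pe x1 x2, pe y1 y2}. lle P W X"
    obtain w1 w2 where w: "W = pe w1 w2" "in_P w1 w2" using W(1) P_cases by blast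
    then show "lle P W (pe (meet E1 x1 y1) (meet E2 x2 y2))"
      using W(2) m1.E.le_meet_iff m2.E.le_meet_iff xf yf in_P_D[OF w(2)] by auto
  qed
qed

lemma P_finite_lattice: "finite_lattice P"
  unfolding finite_lattice_def
proof (intro conjI ballI)
  show "finite (flats P)" by (rule P_finite)
  show "flats P \<noteq> {}" using in_P_i[of "bot L"] P_flats by auto
next
  fix X assume "X \<in> flats P"
  then show "lle P X X" by (elim P_cases) (auto dest: in_P_D)
next
  fix X Y assume "X \<in> flats P" "Y \<in> flats P"
  then obtain x1 x2 y1 y2 where xy: "X = pe x1 x2" "in_P x1 x2" "Y = pe y1 y2" "in_P y1 y2"
    by (metis P_cases)
  then show "lle P X Y \<and> lle P Y X \<longrightarrow> X = Y"
    using m1.E.le_antisym[of x1 y1] m2.E.le_antisym[of x2 y2] in_P_D by auto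
  show "\<exists>z. is_lub P {X, Y} z" using P_is_lub xy by blast
  show "\<exists>z. is_glb P {X, Y} z" using P_is_glb xy by blast
next
  fix X Y Z assume "X \<in> flats P" "Y \<in> flats P" "Z \<in> flats P"
  then obtain x1 x2 y1 y2 z1 z2 where
    "X = pe x1 x2" "in_P x1 x2" "Y = pe y1 y2" "in_P y1 y2" "Z = pe z1 z2" "in_P z1 z2"
    by (metis P_cases)
  then show "lle P X Y \<and> lle P Y Z \<longrightarrow> lle P X Z"
    using m1.E.le_trans[of x1 y1 z1] m2.E.le_trans[of x2 y2 z2] by (auto dest: in_P_D)
qed

sublocale P: fin_lattice P
  by (rule fin_lattice.intro, rule P_finite_lattice)

lemma P_join: "in_P x1 x2 \<Longrightarrow> in_P y1 y2
    \<Longrightarrow> join P (pe x1 x2) (pe y1 y2) = pe (P_join1 x1 x2 y1 y2) (P_join2 x1 x2 y1 y2)"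
  unfolding join_def using P_is_lub P.Join_eq by blast

lemma P_meet: "in_P x1 x2 \<Longrightarrow> in_P y1 y2
    \<Longrightarrow> meet P (pe x1 x2) (pe y1 y2) = pe (meet E1 x1 y1) (meet E2 x2 y2)"
  using P_is_glb P.meet_glb P.glb_unique P_flats by metis

lemma in_P_bot: "in_P (bot E1) (bot E2)"
  using in_P_i[of "bot L"] by simp

lemma P_bot: "bot P = pe (bot E1) (bot E2)"
proof (rule P.bot_unique)
  show "pe (bot E1) (bot E2) \<in> flats P" using in_P_bot P_flats by simp
  fix Y assume "Y \<in> flats P"
  then show "lle P (pe (bot E1) (bot E2)) Y"
    by (elim P_cases) (auto dest: in_P_D simp: m1.E.bot_le m2.E.bot_le)
qed

lemma in_P_top: "in_P (top E1) (top E2)"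
  using in_P_ge_Fi m1.E.le_top m2.E.le_top by simp

lemma P_top: "top P = pe (top E1) (top E2)"
proof (rule P.top_unique)
  show "pe (top E1) (top E2) \<in> flats P" using in_P_top P_flats by simp
  fix Y assume "Y \<in> flats P"
  then show "lle P Y (pe (top E1) (top E2))"
    by (elim P_cases) (auto dest: in_P_D simp: m1.E.le_top m2.E.le_top)
qed

definition pair_rk :: "nat \<Rightarrow> nat \<Rightarrow> nat" where
  "pair_rk a b = rk E1 a + rk E2 b - rk L (m1.restr a)"

definition code_rk :: "nat \<Rightarrow> nat" where
  "code_rk X = pair_rk (fst (prod_decode X)) (snd (prod_decode X))"

lemma code_rk_pe[simp]: "code_rk (pe a b) = pair_rk a b"
  unfolding code_rk_def by simp

text \<open>The subtraction in \<open>pair_rk\<close> does not truncate, by \<open>m1.rk_restr_le\<close>.\<close>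

lemma pair_rk_restr: "in_P a b \<Longrightarrow> pair_rk a b + rk L (m1.restr a) = rk E1 a + rk E2 b"
  unfolding pair_rk_def using m1.rk_restr_le[of a] by (auto dest: in_P_D)

lemma pair_rk_Fi2: "in_P a b \<Longrightarrow> pair_rk a b + rk E2 m2.Fi = rk E1 a + rk E2 (join E2 b m2.Fi)"
  using pair_rk_restr[of a b] m2.rk_restr[of b] in_P_D[of a b] by auto

text \<open>Between two comparable flats of \<open>P\<close> there is a flat of rank one more than the lower one:
  either one component grows with fixed restriction, or the restriction grows by an atom of \<open>L\<close>
  and both components grow by its images.\<close>

lemma pair_rk_step_restr:
  assumes x: "in_P x1 x2" and y: "in_P y1 y2" and le: "lle E1 x1 y1" "lle E2 x2 y2"
    and ne: "m1.restr x1 \<noteq> m1.restr y1"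
  obtains z1 z2 where "in_P z1 z2" "lle E1 x1 z1" "lle E1 z1 y1" "lle E2 x2 z2" "lle E2 z2 y2"
    "pair_rk z1 z2 = Suc (pair_rk x1 x2)"
proof -
  note xf = in_P_D[OF x] and yf = in_P_D[OF y]
  define a where "a = m1.restr x1"
  have af: "a \<in> flats L" and ab: "lle L a (m1.restr y1)"
    unfolding a_def using m1.restr_mono[OF xf(1) yf(1) le(1)] xf by auto
  obtain q where q: "q \<in> atoms L" "lle L q (m1.restr y1)" "\<not> lle L q a"
    using m1.L.atom_below_not_le[OF af _ ab] ne xf yf unfolding a_def by auto
  define A where "A = join L a q"
  have qf: "q \<in> flats L" using q m1.L.atom_in_flats by simp
  have A: "A \<in> flats L" "lle L a A" "lle L A (m1.restr y1)" "rk L A = Suc (rk L a)"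
    unfolding A_def using m1.L.join_upper1 m1.L.join_least m1.L.rk_join_atom q af qf ab yf by auto
  have A2: "lle L (m2.restr x2) A" "lle L A (m2.restr y2)" using A xf(3) yf(3) unfolding a_def by simp_all
  note z1 = m1.join_i_between[OF xf(1) yf(1) le(1) A(1) A(2)[unfolded a_def] A(3)]
    and z2 = m2.join_i_between[OF xf(2) yf(2) le(2) A(1) A2]
  have z: "in_P (join E1 x1 (i1 A)) (join E2 x2 (i2 A))"
    unfolding in_P_def using z1 z2 A xf yf by simp
  moreover have "pair_rk (join E1 x1 (i1 A)) (join E2 x2 (i2 A)) = Suc (pair_rk x1 x2)"
    using pair_rk_restr[OF z] pair_rk_restr[OF x] z1(3,4) z2(4) A(4) xf(3) unfolding a_def by simp
  ultimately show ?thesis using that z1 z2 by blast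
qed

lemma pair_rk_step:
  assumes x: "in_P x1 x2" and y: "in_P y1 y2" and le: "lle E1 x1 y1" "lle E2 x2 y2"
    and ne: "x1 \<noteq> y1 \<or> x2 \<noteq> y2"
  obtains z1 z2 where "in_P z1 z2" "lle E1 x1 z1" "lle E1 z1 y1" "lle E2 x2 z2" "lle E2 z2 y2"
    "pair_rk z1 z2 = Suc (pair_rk x1 x2)"
proof -
  note xf = in_P_D[OF x] and yf = in_P_D[OF y]
  consider (E1) "m1.restr x1 = m1.restr y1" "x1 \<noteq> y1" | (E2) "m2.restr x2 = m2.restr y2" "x2 \<noteq> y2"
    | (L) "m1.restr x1 \<noteq> m1.restr y1"
    using ne xf(3) yf(3) by metis
  then show ?thesis
  proof cases
    case E1
    then obtain z1 where z1: "z1 \<in> flats E1" "lle E1 x1 z1" "lle E1 z1 y1" "m1.restr z1 = m1.restr x1"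
      "rk E1 z1 = Suc (rk E1 x1)"
      using m1.cover_with_same_restr xf yf le by metis
    then have "in_P z1 x2" using xf unfolding in_P_def by simp
    then show ?thesis
      using that[of z1 x2] pair_rk_restr[OF x] pair_rk_restr[of z1 x2] z1 xf le by simp
  next
    case E2
    then obtain z2 where z2: "z2 \<in> flats E2" "lle E2 x2 z2" "lle E2 z2 y2" "m2.restr z2 = m2.restr x2"
      "rk E2 z2 = Suc (rk E2 x2)"
      using m2.cover_with_same_restr xf yf le by metis
    then have "in_P x1 z2" using xf unfolding in_P_def by simp
    then show ?thesis
      using that[of x1 z2] pair_rk_restr[OF x] pair_rk_restr[of x1 z2] z2 xf le by simp
  next
    case L
    then show ?thesis using pair_rk_step_restr[OF x y le] that by blast
  qed
qed

lemma code_rk_covers: "covers P X Y \<Longrightarrow> code_rk Y = Suc (code_rk X)"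
proof -
  assume "covers P X Y"
  then have XY: "X \<in> flats P" "Y \<in> flats P" "lle P X Y" "X \<noteq> Y"
    and no_between: "\<not> (\<exists>Z\<in>flats P. lless P X Z \<and> lless P Z Y)" unfolding covers_def lless_def by auto
  obtain x1 x2 y1 y2 where xy: "X = pe x1 x2" "in_P x1 x2" "Y = pe y1 y2" "in_P y1 y2"
    using XY by (metis P_cases)
  obtain z1 z2 where z: "in_P z1 z2" "lle E1 x1 z1" "lle E1 z1 y1" "lle E2 x2 z2" "lle E2 z2 y2"
    "pair_rk z1 z2 = Suc (pair_rk x1 x2)"
    using pair_rk_step[OF xy(2) xy(4)] XY xy by auto
  have "lless P X (pe z1 z2)" using z xy unfolding lless_def by auto
  moreover have "pe z1 z2 \<in> flats P" using z P_flats by simp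
  ultimately have "pe z1 z2 = Y" using no_between z xy unfolding lless_def by auto
  then show ?thesis using z xy by auto
qed

lemma code_rk_bot: "code_rk (bot P) = 0"
  using pair_rk_restr[OF in_P_bot] m1.restr_bot unfolding P_bot by simp

lemma P_ranked: "ranked P" and rk_P: "X \<in> flats P \<Longrightarrow> rk P X = code_rk X"
  using P.rank_function[where \<rho>=code_rk, OF code_rk_bot code_rk_covers] by auto

lemma rk_P_pe: "in_P a b \<Longrightarrow> rk P (pe a b) = pair_rk a b"
  using rk_P P_flats by simp

lemma atoms_P_iff: "X \<in> atoms P \<longleftrightarrow> X \<in> flats P \<and> code_rk X = 1"
  unfolding atoms_def using rk_P by auto

lemma lift1_eq: "lift1 L E1 i1 i2 h = pe h (i2 (m1.restr h))"
  unfolding lift1_def m1.restr_def m1.Fi_def by simp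

lemma lift2_eq: "lift2 L E2 i1 i2 h = pe (i1 (m2.restr h)) h"
  unfolding lift2_def m2.restr_def m2.Fi_def by simp

lemma in_P_lift1: "h \<in> flats E1 \<Longrightarrow> in_P h (i2 (m1.restr h))"
  and in_P_lift2: "h \<in> flats E2 \<Longrightarrow> in_P (i1 (m2.restr h)) h"
  unfolding in_P_def by simp_all

lemma lift1_atom:
  assumes "h \<in> atoms E1"
  shows "lift1 L E1 i1 i2 h \<in> atoms P"
proof -
  have h: "h \<in> flats E1" using assms m1.E.atom_in_flats by simp
  have "pair_rk h (i2 (m1.restr h)) = 1"
    using pair_rk_restr[OF in_P_lift1[OF h]] m1.E.rk_atom[OF assms] m2.i.emb_rk h by simp
  then show ?thesis unfolding atoms_P_iff lift1_eq using in_P_lift1[OF h] P_flats by simp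
qed

lemma lift2_atom:
  assumes "h \<in> atoms E2"
  shows "lift2 L E2 i1 i2 h \<in> atoms P"
proof -
  have h: "h \<in> flats E2" using assms m2.E.atom_in_flats by simp
  have "pair_rk (i1 (m2.restr h)) h = 1"
    using pair_rk_restr[OF in_P_lift2[OF h]] m2.E.rk_atom[OF assms] m1.i.emb_rk h by simp
  then show ?thesis unfolding atoms_P_iff lift2_eq using in_P_lift2[OF h] P_flats by simp
qed

lemma lift1_le_iff:
  assumes x: "in_P x1 x2" and h: "h \<in> flats E1"
  shows "lle P (lift1 L E1 i1 i2 h) (pe x1 x2) \<longleftrightarrow> lle E1 h x1"
proof -
  have "lle E2 (i2 (m1.restr h)) x2" if "lle E1 h x1"
    using m2.i_le_iff_le_restr[of "m1.restr h" x2] m1.restr_mono[OF h _ that] in_P_D[OF x] h by simp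
  then show ?thesis unfolding lift1_eq by auto
qed

lemma lift2_le_iff:
  assumes x: "in_P x1 x2" and h: "h \<in> flats E2"
  shows "lle P (lift2 L E2 i1 i2 h) (pe x1 x2) \<longleftrightarrow> lle E2 h x2"
proof -
  have "lle E1 (i1 (m2.restr h)) x1" if "lle E2 h x2"
    using m1.i_le_iff_le_restr[of "m2.restr h" x1] m2.restr_mono[OF h _ that] in_P_D[OF x] h by simp
  then show ?thesis unfolding lift2_eq by auto
qed

text \<open>Every flat is the join of the lifts of the atoms below its two components.\<close>

lemma P_atomic: "atomic P"
  unfolding atomic_def
proof
  fix X assume X: "X \<in> flats P"
  obtain x1 x2 where x: "X = pe x1 x2" "in_P x1 x2" using X P_cases by blast
  note xf = in_P_D[OF x(2)]
  define S where "S = {A \<in> atoms P. lle P A X}"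
  have Sf: "S \<subseteq> flats P" unfolding S_def atoms_def by auto
  obtain w1 w2 where w: "Join P S = pe w1 w2" "in_P w1 w2" using P.Join_in[OF Sf] P_cases by blast
  obtain T1 where T1: "T1 \<subseteq> atoms E1" "x1 = Join E1 T1" using m1.E.atomic_Join xf by blast
  obtain T2 where T2: "T2 \<subseteq> atoms E2" "x2 = Join E2 T2" using m2.E.atomic_Join xf by blast
  have T1f: "T1 \<subseteq> flats E1" and T2f: "T2 \<subseteq> flats E2"
    using T1 T2 m1.E.atom_in_flats m2.E.atom_in_flats by auto
  have "lift1 L E1 i1 i2 h \<in> S" if "h \<in> T1" for h
  proof -
    have "h \<in> atoms E1" "h \<in> flats E1" "lle E1 h x1" using that T1 T1f m1.E.Join_upper[OF T1f] by auto
    then show ?thesis unfolding S_def using lift1_atom lift1_le_iff[OF x(2)] x(1) by simp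
  qed
  then have "lle E1 h w1" if "h \<in> T1" for h
    using P.Join_upper[OF Sf] w lift1_le_iff[OF w(2)] T1f that by fastforce
  then have "lle E1 x1 w1" using m1.E.Join_least[OF T1f] T1 in_P_D[OF w(2)] by auto
  moreover have "lift2 L E2 i1 i2 h \<in> S" if "h \<in> T2" for h
  proof -
    have "h \<in> atoms E2" "h \<in> flats E2" "lle E2 h x2" using that T2 T2f m2.E.Join_upper[OF T2f] by auto
    then show ?thesis unfolding S_def using lift2_atom lift2_le_iff[OF x(2)] x(1) by simp
  qed
  then have "lle E2 h w2" if "h \<in> T2" for h
    using P.Join_upper[OF Sf] w lift2_le_iff[OF w(2)] T2f that by fastforce
  then have "lle E2 x2 w2" using m2.E.Join_least[OF T2f] T2 in_P_D[OF w(2)] by auto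
  moreover have "lle P (Join P S) X" using P.Join_least[OF Sf X] unfolding S_def by auto
  ultimately have "X = Join P S" using P.le_antisym[OF X P.Join_in[OF Sf]] x w by simp
  moreover have "S \<subseteq> atoms P" unfolding S_def by auto
  ultimately show "\<exists>S\<subseteq>atoms P. X = Join P S" by blast
qed

lemma rk_restr_join_le:
  assumes x: "in_P x1 x2" and y: "in_P y1 y2"
  shows "rk L (restr_join (join E1 x1 y1) (join E2 x2 y2)) + rk L (join L (m1.restr x1) (m1.restr y1))
    \<le> rk L (m1.restr (join E1 x1 y1)) + rk L (m2.restr (join E2 x2 y2))"
proof -
  note xf = in_P_D[OF x] and yf = in_P_D[OF y]
  define A1 where "A1 = m1.restr (join E1 x1 y1)"
  define A2 where "A2 = m2.restr (join E2 x2 y2)"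
  have A: "A1 \<in> flats L" "A2 \<in> flats L" unfolding A1_def A2_def using xf yf by auto
  have "lle L (m1.restr x1) A1" "lle L (m1.restr y1) A1"
    unfolding A1_def using m1.restr_mono[OF _ _ m1.E.join_upper1] m1.restr_mono[OF _ _ m1.E.join_upper2]
      xf(1) yf(1) by auto
  moreover have "lle L (m2.restr x2) A2" "lle L (m2.restr y2) A2"
    unfolding A2_def using m2.restr_mono[OF _ _ m2.E.join_upper1] m2.restr_mono[OF _ _ m2.E.join_upper2]
      xf(2) yf(2) by auto
  ultimately have "lle L (join L (m1.restr x1) (m1.restr y1)) (meet L A1 A2)"
    using m1.L.join_least m1.L.le_meet_iff A m1.restr_in xf yf by simp
  then have "rk L (join L (m1.restr x1) (m1.restr y1)) \<le> rk L (meet L A1 A2)"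
    using m1.L.rk_mono A xf yf by simp
  then show ?thesis
    using m1.L.rk_semimodular[OF A] unfolding restr_join_def A1_def[symmetric] A2_def[symmetric] by simp
qed

text \<open>Semimodularity of \<open>P\<close> combines semimodularity of \<open>E1\<close>, of \<open>L\<close>, and the modular
  inequality of \<open>E2\<close> relative to \<open>Fi\<close>; ranks in \<open>P\<close> are measured through \<open>pair_rk_Fi2\<close>.\<close>

lemma P_semimodular: "semimodular P"
  unfolding semimodular_def
proof (intro ballI)
  fix X Y assume X: "X \<in> flats P" and Y: "Y \<in> flats P"
  obtain x1 x2 where x: "X = pe x1 x2" "in_P x1 x2" using X P_cases by blast
  obtain y1 y2 where y: "Y = pe y1 y2" "in_P y1 y2" using Y P_cases by blast
  note xf = in_P_D[OF x(2)] and yf = in_P_D[OF y(2)]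
  define j1 where "j1 = join E1 x1 y1"
  define j2 where "j2 = join E2 x2 y2"
  define C where "C = restr_join j1 j2"
  define F2 where "F2 = m2.Fi"
  have j: "j1 \<in> flats E1" "j2 \<in> flats E2" and Cf: "C \<in> flats L"
    unfolding j1_def j2_def C_def using xf yf restr_join_in by auto
  have in_meet: "in_P (meet E1 x1 y1) (meet E2 x2 y2)" using P_is_glb(1)[OF x(2) y(2)] .
  have in_join: "in_P (join E1 j1 (i1 C)) (join E2 j2 (i2 C))"
    using in_P_join_restr_join[OF j] unfolding C_def .
  have rk_meet: "rk P (meet P X Y) + rk E2 F2
      = rk E1 (meet E1 x1 y1) + rk E2 (join E2 (meet E2 x2 y2) F2)"
    using P_meet[OF x(2) y(2)] rk_P_pe[OF in_meet] pair_rk_Fi2[OF in_meet] x y unfolding F2_def by simp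
  have "join E2 (join E2 j2 (i2 C)) F2 = join E2 j2 F2"
    using m2.E.join_assoc m2.E.join_absorb2 m2.i_le_Fi j Cf unfolding F2_def by simp
  then have rk_join: "rk P (join P X Y) + rk E2 F2 = rk E1 (join E1 j1 (i1 C)) + rk E2 (join E2 j2 F2)"
    using P_join[OF x(2) y(2)] rk_P_pe[OF in_join] pair_rk_Fi2[OF in_join] x y
    unfolding P_join1_def P_join2_def j1_def j2_def C_def F2_def by simp
  have rk_X: "rk P X + rk E2 F2 = rk E1 x1 + rk E2 (join E2 x2 F2)"
    and rk_Y: "rk P Y + rk E2 F2 = rk E1 y1 + rk E2 (join E2 y2 F2)"
    using pair_rk_Fi2[OF x(2)] pair_rk_Fi2[OF y(2)] rk_P_pe x y unfolding F2_def by simp_all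
  have "rk E1 (meet E1 x1 y1) + rk E1 j1 \<le> rk E1 x1 + rk E1 y1"
    unfolding j1_def using m1.E.rk_semimodular xf yf by simp
  moreover have "rk E1 (join E1 j1 (i1 C)) + rk L (m1.restr j1) = rk E1 j1 + rk L C"
    using m1.rk_join_i[OF j(1) Cf] m1.L.join_upper1 j unfolding C_def restr_join_def by simp
  moreover have "rk L C + rk L (join L (m2.restr x2) (m2.restr y2)) \<le> rk L (m1.restr j1) + rk L
    (m2.restr j2)"
    using rk_restr_join_le[OF x(2) y(2)] xf yf unfolding C_def j1_def j2_def by simp
  moreover have "rk L (m2.restr j2) + rk E2 (join E2 j2 F2) + rk E2 (join E2 (meet E2 x2 y2) F2)
      \<le> rk E2 (join E2 x2 F2) + rk E2 (join E2 y2 F2) + rk L (join L (m2.restr x2) (m2.restr y2))"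
    using m2.rk_join_Fi_semimodular[OF xf(2) yf(2)] unfolding j2_def F2_def .
  ultimately show "rk P (meet P X Y) + rk P (join P X Y) \<le> rk P X + rk P Y"
    using rk_meet rk_join rk_X rk_Y by linarith
qed

lemma P_geometric: "geometric_lattice P"
  unfolding geometric_lattice_def using P_finite_lattice P_ranked P_atomic P_semimodular by simp

sublocale P: geom_lattice P
  by (unfold_locales, rule P_geometric)

lemma iota12_eq: "iota12 i1 i2 a = pe (i1 a) (i2 a)"
  unfolding iota12_def by simp

lemma F_iota_P: "F_iota L (iota12 i1 i2) = pe m1.Fi m2.Fi"
  unfolding F_iota_def iota12_eq m1.Fi_eq m2.Fi_eq by simp

lemma in_P_Fi: "in_P m1.Fi m2.Fi"
  using in_P_i[of "top L"] m1.Fi_eq m2.Fi_eq by simp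

lemma modular_flat_P_pair:
  assumes G1: "modular_flat E1 G1" "lle E1 m1.Fi G1" and G2: "modular_flat E2 G2" "lle E2 m2.Fi G2"
  shows "modular_flat P (pe G1 G2)"
  unfolding modular_flat_def
proof (intro conjI ballI)
  have Gf: "G1 \<in> flats E1" "G2 \<in> flats E2" using G1 G2 m1.E.modular_flat_in m2.E.modular_flat_in by auto
  have inG: "in_P G1 G2" using in_P_ge_Fi Gf G1 G2 by simp
  then show "pe G1 G2 \<in> flats P" using P_flats by simp
  fix Y assume "Y \<in> flats P"
  then obtain y1 y2 where y: "Y = pe y1 y2" "in_P y1 y2" using P_cases by blast
  note yf = in_P_D[OF y(2)]
  define g where "g = m1.restr y1"
  have ge: "lle E1 m1.Fi (join E1 G1 y1)" "lle E2 m2.Fi (join E2 G2 y2)"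
    using m1.E.le_trans[OF _ Gf(1) _ G1(2) m1.E.join_upper1] m2.E.le_trans[OF _ Gf(2) _ G2(2)
      m2.E.join_upper1]
      Gf yf by auto
  have restr_top: "m1.restr (join E1 G1 y1) = top L" "m2.restr (join E2 G2 y2) = top L" "m1.restr
    G1 = top L"
    using m1.restr_ge_Fi m2.restr_ge_Fi ge Gf yf G1 by auto
  have "P_join1 G1 G2 y1 y2 = join E1 G1 y1" "P_join2 G1 G2 y1 y2 = join E2 G2 y2"
    unfolding P_join1_def P_join2_def restr_join_def restr_top m1.L.join_absorb1[OF m1.L.top_in
      m1.L.top_in m1.L.le_refl[OF m1.L.top_in]]
    using m1.Fi_eq m2.Fi_eq m1.E.join_absorb1 m2.E.join_absorb1 ge Gf yf by simp_all
  then have join_eq: "join P (pe G1 G2) Y = pe (join E1 G1 y1) (join E2 G2 y2)"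
    and in_join: "in_P (join E1 G1 y1) (join E2 G2 y2)"
    using P_join[OF inG y(2)] P_is_lub(1)[OF inG y(2)] y by simp_all
  have restr_meet: "m1.restr (meet E1 G1 y1) = g"
    unfolding g_def using m1.restr_meet Gf yf restr_top m1.L.meet_absorb2 m1.L.le_top by simp
  have in_meet: "in_P (meet E1 G1 y1) (meet E2 G2 y2)" using P_is_glb(1)[OF inG y(2)] .
  show "rk P (meet P (pe G1 G2) Y) + rk P (join P (pe G1 G2) Y) = rk P (pe G1 G2) + rk P Y"
    using P_meet[OF inG y(2)] join_eq rk_P_pe in_meet in_join inG y
      pair_rk_restr[OF in_meet] pair_rk_restr[OF in_join] pair_rk_restr[OF inG] pair_rk_restr[OF y(2)]
      m1.E.modular_flat_rk[OF G1(1) yf(1)] m2.E.modular_flat_rk[OF G2(1) yf(2)] restr_top restr_meet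
    unfolding g_def by simp
qed

lemma iota12_embedding: "embedding L P (iota12 i1 i2)"
  unfolding embedding_def
proof (intro conjI ballI impI allI)
  show "inj_on (iota12 i1 i2) (flats L)" unfolding inj_on_def iota12_eq using m1.i.emb_eq_iff by simp
  show "iota12 i1 i2 ` flats L \<subseteq> flats P" unfolding iota12_eq using in_P_i P_flats by auto
next
  fix x y assume "x \<in> flats L" "y \<in> flats L" "lle L x y"
  then show "lle P (iota12 i1 i2 x) (iota12 i1 i2 y)" unfolding iota12_eq
    using m1.i.emb_mono m2.i.emb_mono by simp
next
  fix S assume S: "S \<subseteq> flats L"
  have JS: "Join L S \<in> flats L" using S by simp
  show "iota12 i1 i2 (Join L S) = Join P (iota12 i1 i2 ` S)"
  proof (rule sym, rule P.Join_eq, unfold is_lub_def, intro conjI ballI impI)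
    show "iota12 i1 i2 (Join L S) \<in> flats P" unfolding iota12_eq using in_P_i JS P_flats by simp
  next
    fix X assume "X \<in> iota12 i1 i2 ` S"
    then obtain a where a: "a \<in> S" "X = iota12 i1 i2 a" by auto
    then have "a \<in> flats L" "lle L a (Join L S)" using S m1.L.Join_upper by auto
    then show "lle P X (iota12 i1 i2 (Join L S))"
      unfolding a(2) iota12_eq using m1.i.emb_mono m2.i.emb_mono JS by simp
  next
    fix W assume W: "W \<in> flats P" "\<forall>X\<in>iota12 i1 i2 ` S. lle P X W"
    obtain w1 w2 where w: "W = pe w1 w2" "in_P w1 w2" using W P_cases by blast
    have "\<forall>a\<in>S. lle E1 (i1 a) w1 \<and> lle E2 (i2 a) w2" using W(2) w unfolding iota12_eq by auto
    moreover have "i1 ` S \<subseteq> flats E1" "i2 ` S \<subseteq> flats E2" using S by auto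
    ultimately have "lle E1 (Join E1 (i1 ` S)) w1" "lle E2 (Join E2 (i2 ` S)) w2"
      using m1.E.Join_least[of "i1 ` S" w1] m2.E.Join_least[of "i2 ` S" w2] in_P_D[OF w(2)] by auto
    then show "lle P (iota12 i1 i2 (Join L S)) W" unfolding iota12_eq w
      using m1.i.emb_Join m2.i.emb_Join S by simp
  qed
next
  show "iota12 i1 i2 ` atoms L \<subseteq> atoms P"
  proof
    fix X assume "X \<in> iota12 i1 i2 ` atoms L"
    then obtain a where a: "a \<in> atoms L" "X = pe (i1 a) (i2 a)" unfolding iota12_eq by auto
    have af: "a \<in> flats L" using a m1.L.atom_in_flats by simp
    have "pair_rk (i1 a) (i2 a) = 1"
      using pair_rk_restr[OF in_P_i[OF af]] m1.i.emb_rk m2.i.emb_rk af m1.L.rk_atom[OF a(1)] by simp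
    then show "X \<in> atoms P" unfolding atoms_P_iff a using in_P_i[OF af] P_flats by simp
  qed
qed

lemma iota12_image: "iota12 i1 i2 ` flats L = interval P (bot P) (pe m1.Fi m2.Fi)"
proof
  show "iota12 i1 i2 ` flats L \<subseteq> interval P (bot P) (pe m1.Fi m2.Fi)"
    unfolding interval_def iota12_eq using in_P_i P_flats P.bot_le m1.i_le_Fi m2.i_le_Fi by auto
next
  show "interval P (bot P) (pe m1.Fi m2.Fi) \<subseteq> iota12 i1 i2 ` flats L"
  proof
    fix X assume X: "X \<in> interval P (bot P) (pe m1.Fi m2.Fi)"
    then obtain x1 x2 where x: "X = pe x1 x2" "in_P x1 x2" unfolding interval_def using P_cases by blast
    note xf = in_P_D[OF x(2)]
    have "lle E1 x1 m1.Fi" "lle E2 x2 m2.Fi" using X x unfolding interval_def by auto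
    then obtain a a' where "a \<in> flats L" "x1 = i1 a" "a' \<in> flats L" "x2 = i2 a'"
      using m1.below_Fi m2.below_Fi xf by metis
    then show "X \<in> iota12 i1 i2 ` flats L" unfolding iota12_eq using x xf by auto
  qed
qed

lemma P_modular_extension: "modular_extension L P (iota12 i1 i2)"
  unfolding modular_extension_def
proof (intro conjI exI)
  show "modular_flat P (pe m1.Fi m2.Fi)"
    using modular_flat_P_pair[OF m1.Fi_modular _ m2.Fi_modular] by simp
qed (fact P_geometric iota12_embedding iota12_image)+

abbreviation lift_word :: "nat list \<Rightarrow> nat list \<Rightarrow> nat list" where
  "lift_word J1 J2 \<equiv> map (lift1 L E1 i1 i2) J1 @ map (lift2 L E2 i1 i2) J2"

lemma lift_word_atoms: "set J1 \<subseteq> atoms E1 \<Longrightarrow> set J2 \<subseteq> atoms E2 \<Longrightarrow> set (lift_word J1 J2) \<subseteq> atoms P"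
  using lift1_atom lift2_atom by auto

lemma lless_top_P_lift_word:
  assumes J1: "set J1 \<subseteq> atoms E1" and J2: "set J2 \<subseteq> atoms E2"
    and "lless E1 (join E1 m1.Fi (Join E1 (set J1))) (top E1) \<or> lless E2 (join E2 m2.Fi (Join E2
        (set J2))) (top E2)"
  shows "lless P (join P (pe m1.Fi m2.Fi) (Join P (set (lift_word J1 J2)))) (top P)"
proof -
  define K1 where "K1 = join E1 m1.Fi (Join E1 (set J1))"
  define K2 where "K2 = join E2 m2.Fi (Join E2 (set J2))"
  have J1f: "set J1 \<subseteq> flats E1" and J2f: "set J2 \<subseteq> flats E2"
    using J1 J2 m1.E.atom_in_flats m2.E.atom_in_flats by auto
  have K: "K1 \<in> flats E1" "K2 \<in> flats E2" "lle E1 m1.Fi K1" "lle E2 m2.Fi K2"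
    "lle E1 (Join E1 (set J1)) K1" "lle E2 (Join E2 (set J2)) K2"
    unfolding K1_def K2_def
      using J1f J2f m1.E.join_upper1 m1.E.join_upper2 m2.E.join_upper1 m2.E.join_upper2
    by auto
  have inK: "in_P K1 K2" using in_P_ge_Fi K by simp
  have Sf: "set (lift_word J1 J2) \<subseteq> flats P" using lift_word_atoms[OF J1 J2] P.atom_in_flats by auto
  have "lle P X (pe K1 K2)" if "X \<in> set (lift_word J1 J2)" for X
    using that lift1_le_iff[OF inK] lift2_le_iff[OF inK] J1f J2f K
      m1.E.le_trans[OF _ _ K(1) m1.E.Join_upper[OF J1f] K(5)] m2.E.le_trans[OF _ _ K(2)
        m2.E.Join_upper[OF J2f] K(6)]
    by auto
  then have "lle P (Join P (set (lift_word J1 J2))) (pe K1 K2)"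
    using P.Join_least[OF Sf] inK P_flats by simp
  then have le_K: "lle P (join P (pe m1.Fi m2.Fi) (Join P (set (lift_word J1 J2)))) (pe K1 K2)"
    using P.join_least in_P_Fi inK P_flats Sf K by simp
  have "pe K1 K2 \<noteq> top P" using assms(3) unfolding P_top K1_def K2_def lless_def by auto
  then show ?thesis
    using le_K P.le_antisym P.le_top in_P_Fi inK P_flats Sf unfolding lless_def by fastforce
qed

lemma lift_word_not_below:
  assumes G: "in_P G1 G2" and J1: "set J1 \<subseteq> flats E1" and J2: "set J2 \<subseteq> flats E2"
  shows "{k. k < length (lift_word J1 J2) \<and> \<not> lle P (lift_word J1 J2 ! k) (pe G1 G2)}
    = {k. k < length J1 \<and> \<not> lle E1 (J1 ! k) G1} \<union> (\<lambda>k. length J1 + k) ` {k. k < length J2 \<and> \<not> lle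
      E2 (J2 ! k) G2}"
    (is "?W = ?A1 \<union> ?A2")
proof (intro set_eqI iffI)
  fix k assume k: "k \<in> ?W"
  show "k \<in> ?A1 \<union> ?A2"
  proof (cases "k < length J1")
    case True
    then show ?thesis using k lift1_le_iff[OF G, of "J1 ! k"] J1 nth_mem by (auto simp: nth_append)
  next
    case False
    define k' where "k' = k - length J1"
    have "k = length J1 + k'" "k' < length J2" using False k unfolding k'_def by auto
    moreover have "\<not> lle E2 (J2 ! k') G2"
      using k False lift2_le_iff[OF G, of "J2 ! k'"] J2 nth_mem calculation by (auto simp: nth_append)
    ultimately show ?thesis by blast
  qed
next
  fix k assume "k \<in> ?A1 \<union> ?A2"
  then consider (E1) "k < length J1" "\<not> lle E1 (J1 ! k) G1"
    | (E2) k' where "k = length J1 + k'" "k' < length J2" "\<not> lle E2 (J2 ! k') G2"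
    by blast
  then show "k \<in> ?W"
  proof cases
    case E1
    then show ?thesis using lift1_le_iff[OF G, of "J1 ! k"] J1 nth_mem by (auto simp: nth_append)
  next
    case E2
    then show ?thesis using lift2_le_iff[OF G, of "J2 ! k'"] J2 nth_mem by (auto simp: nth_append)
  qed
qed

lemma card_lift_word_not_below:
  assumes "in_P G1 G2" "set J1 \<subseteq> flats E1" "set J2 \<subseteq> flats E2"
  shows "card {k. k < length (lift_word J1 J2) \<and> \<not> lle P (lift_word J1 J2 ! k) (pe G1 G2)}
    = card {k. k < length J1 \<and> \<not> lle E1 (J1 ! k) G1} + card {k. k < length J2 \<and> \<not> lle E2 (J2 ! k) G2}"
proof -
  let ?A1 = "{k. k < length J1 \<and> \<not> lle E1 (J1 ! k) G1}" and ?A2 = "{k. k < length J2 \<and> \<not> lle E2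
    (J2 ! k) G2}"
  have "?A1 \<inter> (\<lambda>k. length J1 + k) ` ?A2 = {}" by auto
  moreover have "card ((\<lambda>k. length J1 + k) ` ?A2) = card ?A2" by (simp add: card_image)
  ultimately show ?thesis unfolding lift_word_not_below[OF assms] by (simp add: card_Un_disjoint)
qed

end

text \<open>Swapping the two components identifies the two pushouts of a pair of extensions.\<close>

definition swap_code :: "nat \<Rightarrow> nat" where
  "swap_code X = pe (snd (prod_decode X)) (fst (prod_decode X))"

lemma swap_code_pe[simp]: "swap_code (pe a b) = pe b a"
  unfolding swap_code_def by simp

lemma swap_code_swap_code[simp]: "swap_code (swap_code X) = X"
  by (metis pe_surj swap_code_pe)

lemma (in pushout_ext) order_iso_prod_swap:
  assumes "order_iso_prod (pushout L E2 i2 E1 i1) A B \<psi>"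
  shows "order_iso_prod P A B (\<psi> \<circ> swap_code)"
proof -
  interpret Q: pushout_ext L E2 i2 E1 i1 by unfold_locales
  have swap_flats: "swap_code X \<in> flats Q.P \<longleftrightarrow> X \<in> flats P" for X
  proof -
    obtain a b where "X = pe a b" using pe_surj by blast
    then show ?thesis using P_flats Q.P_flats unfolding in_P_def Q.in_P_def by auto
  qed
  have swap_le: "lle Q.P (swap_code X) (swap_code Y) \<longleftrightarrow> lle P X Y" for X Y
  proof -
    obtain a b a' b' where "X = pe a b" "Y = pe a' b'" using pe_surj by metis
    then show ?thesis by auto
  qed
  have "bij_betw swap_code (flats P) (flats Q.P)"
    by (rule bij_betw_byWitness[where f' = swap_code]) (auto simp: swap_flats, metis swap_flats
      swap_code_swap_code)
  then have "bij_betw (\<psi> \<circ> swap_code) (flats P) (flats A \<times> flats B)"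
    using assms bij_betw_trans unfolding order_iso_prod_def by blast
  moreover have "lle P X Y \<longleftrightarrow> lle A (fst (\<psi> (swap_code X))) (fst (\<psi> (swap_code Y)))
      \<and> lle B (snd (\<psi> (swap_code X))) (snd (\<psi> (swap_code Y)))" if "X \<in> flats P" "Y \<in> flats P" for X Y
    using assms swap_le swap_flats that unfolding order_iso_prod_def by blast
  ultimately show ?thesis unfolding order_iso_prod_def by simp
qed

section \<open>Products of modular diagrams respect the relations\<close>

lemma dprod_eq: "dprod L (E1, i1, J1) (E2, i2, J2) =
  (pushout L E1 i1 E2 i2, iota12 i1 i2, map (lift1 L E1 i1 i2) J1 @ map (lift2 L E2 i1 i2) J2)"
  unfolding dprod_def by simp

lemma modular_diagramD: "modular_diagram L (E, i, J) \<Longrightarrow> modular_extension L E i"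
  "modular_diagram L (E, i, J) \<Longrightarrow> set J \<subseteq> atoms E"
  unfolding modular_diagram_def by auto

lemma pushout_ext_if_modular_diagrams:
  "geometric_lattice L \<Longrightarrow> modular_diagram L (E1, i1, J1) \<Longrightarrow> modular_diagram L (E2, i2, J2)
    \<Longrightarrow> pushout_ext L E1 i1 E2 i2"
  unfolding pushout_ext_def mod_ext_def using modular_diagramD by blast

lemma modular_diagram_dprod:
  assumes L: "geometric_lattice L" and d1: "modular_diagram L (E1, i1, J1)" and d2:
      "modular_diagram L (E2, i2, J2)"
  shows "modular_diagram L (dprod L (E1, i1, J1) (E2, i2, J2))"
proof -
  interpret pushout_ext L E1 i1 E2 i2 using pushout_ext_if_modular_diagrams[OF assms] .
  show ?thesis unfolding dprod_eq modular_diagram_def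
    using P_modular_extension lift_word_atoms modular_diagramD(2)[OF d1] modular_diagramD(2)[OF
      d2] by simp
qed

lemma transposed_append_right: "transposed J J' \<Longrightarrow> transposed (map f J @ R) (map f J' @ R)"
proof -
  assume "transposed J J'"
  then obtain a b where ab: "a < length J" "b < length J" "a \<noteq> b" "J' = J[a := J ! b, b := J ! a]"
    unfolding transposed_def by blast
  have "map f J' @ R = (map f J @ R)[a := (map f J @ R) ! b, b := (map f J @ R) ! a]"
    using ab by (simp add: map_update list_update_append1 nth_append)
  then show ?thesis unfolding transposed_def using ab by (intro exI[of _ a] exI[of _ b]) auto
qed

lemma transposed_append_left: "transposed J J' \<Longrightarrow> transposed (R @ map f J) (R @ map f J')"
proof -
  assume "transposed J J'"
  then obtain a b where ab: "a < length J" "b < length J" "a \<noteq> b" "J' = J[a := J ! b, b := J ! a]"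
    unfolding transposed_def by blast
  have "R @ map f J' = (R @ map f J)[length R + a := (R @ map f J) ! (length R + b),
      length R + b := (R @ map f J) ! (length R + a)]"
    using ab by (simp add: map_update list_update_append nth_append)
  then show ?thesis unfolding transposed_def using ab
    by (intro exI[of _ "length R + a"] exI[of _ "length R + b"]) auto
qed

lemma rel_R1_dprod_left:
  assumes "geometric_lattice L" "rel_R1 L (E1, i1, J1) (E1', i1', J1')" "modular_diagram L (E2, i2, J2)"
  shows "rel_R1 L (dprod L (E1, i1, J1) (E2, i2, J2)) (dprod L (E1', i1', J1') (E2, i2, J2))"
  using assms modular_diagram_dprod transposed_append_right unfolding rel_R1_def dprod_eq by auto

lemma rel_R1_dprod_right:
  assumes "geometric_lattice L" "rel_R1 L (E2, i2, J2) (E2', i2', J2')" "modular_diagram L (E1, i1, J1)"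
  shows "rel_R1 L (dprod L (E1, i1, J1) (E2, i2, J2)) (dprod L (E1, i1, J1) (E2', i2', J2'))"
  using assms modular_diagram_dprod transposed_append_left unfolding rel_R1_def dprod_eq by auto

lemma rel_R3_dprod_left:
  assumes L: "geometric_lattice L" and r: "rel_R3 L (E1, i1, J1)" and d: "modular_diagram L (E2, i2, J2)"
  shows "rel_R3 L (dprod L (E1, i1, J1) (E2, i2, J2))"
proof -
  have d1: "modular_diagram L (E1, i1, J1)" using r unfolding rel_R3_def by simp
  interpret pushout_ext L E1 i1 E2 i2 using pushout_ext_if_modular_diagrams[OF L d1 d] .
  have "lless P (join P (pe m1.Fi m2.Fi) (Join P (set (lift_word J1 J2)))) (top P)"
    using lless_top_P_lift_word modular_diagramD(2)[OF d1] modular_diagramD(2)[OF d] r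
    unfolding rel_R3_def m1.Fi_def by simp
  then show ?thesis
    unfolding rel_R3_def dprod_eq using modular_diagram_dprod[OF L d1 d, unfolded dprod_eq]
      by (simp add: F_iota_P)
qed

lemma rel_R3_dprod_right:
  assumes L: "geometric_lattice L" and r: "rel_R3 L (E2, i2, J2)" and d: "modular_diagram L (E1, i1, J1)"
  shows "rel_R3 L (dprod L (E1, i1, J1) (E2, i2, J2))"
proof -
  have d2: "modular_diagram L (E2, i2, J2)" using r unfolding rel_R3_def by simp
  interpret pushout_ext L E1 i1 E2 i2 using pushout_ext_if_modular_diagrams[OF L d d2] .
  have "lless P (join P (pe m1.Fi m2.Fi) (Join P (set (lift_word J1 J2)))) (top P)"
    using lless_top_P_lift_word modular_diagramD(2)[OF d] modular_diagramD(2)[OF d2] r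
    unfolding rel_R3_def m2.Fi_def by simp
  then show ?thesis
    unfolding rel_R3_def dprod_eq using modular_diagram_dprod[OF L d d2, unfolded dprod_eq]
      by (simp add: F_iota_P)
qed

text \<open>For (R5) the modular flat \<open>F\<close> of one factor is paired with the top of the other.\<close>

lemma rel_R5_dprod_left:
  assumes L: "geometric_lattice L" and r: "rel_R5 L (E1, i1, J1)" and d: "modular_diagram L (E2, i2, J2)"
  shows "rel_R5 L (dprod L (E1, i1, J1) (E2, i2, J2))"
proof -
  have d1: "modular_diagram L (E1, i1, J1)" using r unfolding rel_R5_def by simp
  interpret pushout_ext L E1 i1 E2 i2 using pushout_ext_if_modular_diagrams[OF L d1 d] .
  obtain F where F: "modular_flat E1 F" "lle E1 m1.Fi F" "card {k. k < length J1 \<and> \<not> lle E1 (J1 !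
    k) F} = 2"
    using r unfolding rel_R5_def m1.Fi_def by auto
  have Ff: "F \<in> flats E1" using F m1.E.modular_flat_in by simp
  have J: "set J1 \<subseteq> flats E1" "set J2 \<subseteq> flats E2"
    using modular_diagramD(2)[OF d1] modular_diagramD(2)[OF d] m1.E.atom_in_flats
      m2.E.atom_in_flats by auto
  have "{k. k < length J2 \<and> \<not> lle E2 (J2 ! k) (top E2)} = {}"
    using J(2) m2.E.le_top nth_mem by blast
  then have "card {k. k < length (lift_word J1 J2) \<and> \<not> lle P (lift_word J1 J2 ! k) (pe F (top E2))} = 2"
    using card_lift_word_not_below[OF in_P_ge_Fi J] Ff F m2.E.le_top by simp
  moreover have "modular_flat P (pe F (top E2))"
    using modular_flat_P_pair F m2.E.modular_flat_top m2.E.le_top by simp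
  ultimately show ?thesis
    unfolding rel_R5_def dprod_eq using modular_diagram_dprod[OF L d1 d, unfolded dprod_eq] F m2.E.le_top
    by (auto simp: F_iota_P)
qed

lemma rel_R5_dprod_right:
  assumes L: "geometric_lattice L" and r: "rel_R5 L (E2, i2, J2)" and d: "modular_diagram L (E1, i1, J1)"
  shows "rel_R5 L (dprod L (E1, i1, J1) (E2, i2, J2))"
proof -
  have d2: "modular_diagram L (E2, i2, J2)" using r unfolding rel_R5_def by simp
  interpret pushout_ext L E1 i1 E2 i2 using pushout_ext_if_modular_diagrams[OF L d d2] .
  obtain F where F: "modular_flat E2 F" "lle E2 m2.Fi F" "card {k. k < length J2 \<and> \<not> lle E2 (J2 !
    k) F} = 2"
    using r unfolding rel_R5_def m2.Fi_def by auto
  have Ff: "F \<in> flats E2" using F m2.E.modular_flat_in by simp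
  have J: "set J1 \<subseteq> flats E1" "set J2 \<subseteq> flats E2"
    using modular_diagramD(2)[OF d] modular_diagramD(2)[OF d2] m1.E.atom_in_flats
      m2.E.atom_in_flats by auto
  have "{k. k < length J1 \<and> \<not> lle E1 (J1 ! k) (top E1)} = {}"
    using J(1) m1.E.le_top nth_mem by blast
  then have "card {k. k < length (lift_word J1 J2) \<and> \<not> lle P (lift_word J1 J2 ! k) (pe (top E1) F)} = 2"
    using card_lift_word_not_below[OF in_P_ge_Fi J] Ff F m1.E.le_top by simp
  moreover have "modular_flat P (pe (top E1) F)"
    using modular_flat_P_pair F m1.E.modular_flat_top m1.E.le_top by simp
  ultimately show ?thesis
    unfolding rel_R5_def dprod_eq using modular_diagram_dprod[OF L d d2, unfolded dprod_eq] F m1.E.le_top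
    by (auto simp: F_iota_P)
qed

locale ext_embedding = m: mod_ext L E i + m': mod_ext L E' i' + \<phi>: lattice_embedding E E' \<phi>
  for L :: "'a lat" and E i E' i' \<phi> +
  assumes compat: "\<And>x. x \<in> flats L \<Longrightarrow> i' x = \<phi> (i x)"
begin

lemma restr_emb: "x \<in> flats E \<Longrightarrow> m'.restr (\<phi> x) = m.restr x"
  by (rule m.L.eq_if_same_lower_bounds)
    (simp_all add: m'.i_le_iff_le_restr[symmetric] m.i_le_iff_le_restr[symmetric] compat \<phi>.emb_le_iff)

end

locale pushout_map = e1: ext_embedding L E1 i1 E1' i1' \<phi>1 + e2: ext_embedding L E2 i2 E2' i2' \<phi>2
  for L :: "'a lat" and E1 i1 E1' i1' \<phi>1 E2 i2 E2' i2' \<phi>2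
begin

sublocale Q: pushout_ext L E1 i1 E2 i2 by unfold_locales
sublocale Q': pushout_ext L E1' i1' E2' i2' by unfold_locales

definition Phi :: "nat \<Rightarrow> nat" where
  "Phi X = pe (\<phi>1 (fst (prod_decode X))) (\<phi>2 (snd (prod_decode X)))"

lemma Phi_pe[simp]: "Phi (pe a b) = pe (\<phi>1 a) (\<phi>2 b)"
  unfolding Phi_def by simp

lemma in_P_Phi: "Q.in_P a b \<Longrightarrow> Q'.in_P (\<phi>1 a) (\<phi>2 b)"
  unfolding Q.in_P_def Q'.in_P_def using e1.restr_emb e2.restr_emb by simp

lemma Phi_in: "X \<in> flats Q.P \<Longrightarrow> Phi X \<in> flats Q'.P"
  by (metis Phi_pe Q'.P_flats Q.P_cases in_P_Phi)

lemma Phi_join: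
  assumes x: "Q.in_P x1 x2" and y: "Q.in_P y1 y2"
  shows "Phi (join Q.P (pe x1 x2) (pe y1 y2)) = join Q'.P (Phi (pe x1 x2)) (Phi (pe y1 y2))"
proof -
  note xf = Q.in_P_D[OF x] and yf = Q.in_P_D[OF y]
  have j: "join E1' (\<phi>1 x1) (\<phi>1 y1) = \<phi>1 (join E1 x1 y1)" "join E2' (\<phi>2 x2) (\<phi>2 y2) = \<phi>2 (join E2 x2 y2)"
    using e1.\<phi>.emb_join e2.\<phi>.emb_join xf yf by simp_all
  have jf: "join E1 x1 y1 \<in> flats E1" "join E2 x2 y2 \<in> flats E2" using xf yf by simp_all
  define C where "C = Q.restr_join (join E1 x1 y1) (join E2 x2 y2)"
  have C: "Q'.restr_join (\<phi>1 (join E1 x1 y1)) (\<phi>2 (join E2 x2 y2)) = C" "C \<in> flats L"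
    unfolding Q'.restr_join_def Q.restr_join_def C_def using e1.restr_emb e2.restr_emb jf by simp_all
  have "Q'.P_join1 (\<phi>1 x1) (\<phi>2 x2) (\<phi>1 y1) (\<phi>2 y2) = \<phi>1 (Q.P_join1 x1 x2 y1 y2)"
    "Q'.P_join2 (\<phi>1 x1) (\<phi>2 x2) (\<phi>1 y1) (\<phi>2 y2) = \<phi>2 (Q.P_join2 x1 x2 y1 y2)"
    unfolding Q'.P_join1_def Q.P_join1_def Q'.P_join2_def Q.P_join2_def j C_def[symmetric] C
    using e1.\<phi>.emb_join e2.\<phi>.emb_join jf C e1.compat e2.compat by simp_all
  then show ?thesis using Q.P_join[OF x y] Q'.P_join[OF in_P_Phi[OF x] in_P_Phi[OF y]] by simp
qed

lemma Phi_Join: "S \<subseteq> flats Q.P \<Longrightarrow> Phi (Join Q.P S) = Join Q'.P (Phi ` S)"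
proof (induction S rule: infinite_finite_induct)
  case (infinite S)
  then show ?case using Q.P_finite finite_subset by blast
next
  case empty
  show ?case using Q.P_bot Q'.P_bot e1.\<phi>.emb_bot e2.\<phi>.emb_bot unfolding bot_def by simp
next
  case (insert X S)
  then have X: "X \<in> flats Q.P" and S: "S \<subseteq> flats Q.P" by auto
  obtain x1 x2 where x: "X = pe x1 x2" "Q.in_P x1 x2" using X Q.P_cases by blast
  obtain y1 y2 where y: "Join Q.P S = pe y1 y2" "Q.in_P y1 y2" using Q.P.Join_in[OF S] Q.P_cases by blast
  have "Phi (Join Q.P (insert X S)) = join Q'.P (Phi X) (Phi (Join Q.P S))"
    using Q.P.Join_insert X S Phi_join x y by simp
  also have "\<dots> = Join Q'.P (insert (Phi X) (Phi ` S))"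
  proof -
    have "Phi ` S \<subseteq> flats Q'.P" using Phi_in S by auto
    then show ?thesis using insert S Q'.P.Join_insert[of "Phi X" "Phi ` S"] Phi_in[OF X] by simp
  qed
  finally show ?case by simp
qed

lemma Phi_pair_rk: "Q.in_P a b \<Longrightarrow> Q'.pair_rk (\<phi>1 a) (\<phi>2 b) = Q.pair_rk a b"
  unfolding Q.pair_rk_def Q'.pair_rk_def using e1.\<phi>.emb_rk e2.\<phi>.emb_rk e1.restr_emb Q.in_P_D by simp

lemma Phi_embedding: "embedding Q.P Q'.P Phi"
  unfolding embedding_def
proof (intro conjI ballI allI impI)
  show "inj_on Phi (flats Q.P)"
    by (rule inj_onI) (metis Phi_pe Q.P_cases Q.in_P_D(1,2) e1.\<phi>.emb_eq_iff e2.\<phi>.emb_eq_iff pe_eq)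
  show "Phi ` flats Q.P \<subseteq> flats Q'.P" using Phi_in by auto
next
  fix X Y assume "X \<in> flats Q.P" "Y \<in> flats Q.P" "lle Q.P X Y"
  then show "lle Q'.P (Phi X) (Phi Y)"
    by (elim Q.P_cases) (auto dest: Q.in_P_D intro: e1.\<phi>.emb_mono e2.\<phi>.emb_mono)
next
  fix S assume "S \<subseteq> flats Q.P"
  then show "Phi (Join Q.P S) = Join Q'.P (Phi ` S)" by (rule Phi_Join)
next
  show "Phi ` atoms Q.P \<subseteq> atoms Q'.P"
  proof
    fix Y assume "Y \<in> Phi ` atoms Q.P"
    then obtain X where X: "X \<in> atoms Q.P" "Y = Phi X" by auto
    then have "X \<in> flats Q.P" "Q.code_rk X = 1" using Q.atoms_P_iff by auto
    then obtain a b where "X = pe a b" "Q.in_P a b" "Q.pair_rk a b = 1" using Q.P_cases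
      by (metis Q.code_rk_pe)
    then show "Y \<in> atoms Q'.P" unfolding Q'.atoms_P_iff X(2) using Phi_pair_rk in_P_Phi Q'.P_flats by simp
  qed
qed

lemma Phi_rk_top:
  assumes "rk E1 (top E1) = rk E1' (top E1')" "rk E2 (top E2) = rk E2' (top E2')"
  shows "rk Q.P (top Q.P) = rk Q'.P (top Q'.P)"
proof -
  have "e1.m.restr (top E1) = top L" "e1.m'.restr (top E1') = top L"
    using e1.m.restr_ge_Fi e1.m'.restr_ge_Fi e1.m.E.le_top e1.m'.E.le_top by auto
  then show ?thesis
    using Q.P_top Q.rk_P_pe Q.in_P_top Q'.P_top Q'.rk_P_pe Q'.in_P_top assms
    unfolding Q.pair_rk_def Q'.pair_rk_def by simp
qed

lemma Phi_lift1: "h \<in> flats E1 \<Longrightarrow> lift1 L E1' i1' i2' (\<phi>1 h) = Phi (lift1 L E1 i1 i2 h)"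
  unfolding Q.lift1_eq Q'.lift1_eq using e1.restr_emb e2.compat by simp

lemma Phi_lift2: "h \<in> flats E2 \<Longrightarrow> lift2 L E2' i1' i2' (\<phi>2 h) = Phi (lift2 L E2 i1 i2 h)"
  unfolding Q.lift2_eq Q'.lift2_eq using e2.restr_emb e1.compat by simp

lemma Phi_iota: "x \<in> flats L \<Longrightarrow> iota12 i1' i2' x = Phi (iota12 i1 i2 x)"
  unfolding Q.iota12_eq Q'.iota12_eq using e1.compat e2.compat by simp

end

lemma ext_embedding_if_rel_R2:
  assumes L: "geometric_lattice L" and r: "rel_R2 L (E, i, J) (E', i', J')"
  obtains \<phi> where "ext_embedding L E i E' i' \<phi>" "rk E (top E) = rk E' (top E')" "J' = map \<phi> J"
proof -
  have d: "modular_diagram L (E, i, J)" "modular_diagram L (E', i', J')" using r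
    unfolding rel_R2_def by auto
  obtain \<phi> where \<phi>: "embedding E E' \<phi>" "rk E (top E) = rk E' (top E')" "\<forall>x\<in>flats L. i' x = \<phi> (i x)"
    "J' = map \<phi> J"
    using r unfolding rel_R2_def by auto
  interpret m: mod_ext L E i using L modular_diagramD(1)[OF d(1)] by unfold_locales
  interpret m': mod_ext L E' i' using L modular_diagramD(1)[OF d(2)] by unfold_locales
  have "ext_embedding L E i E' i' \<phi>"
    unfolding ext_embedding_def ext_embedding_axioms_def lattice_embedding_def
      lattice_embedding_axioms_def
    using m.mod_ext_axioms m'.mod_ext_axioms m.E.geom_lattice_axioms m'.E.geom_lattice_axioms \<phi> by simp
  then show ?thesis using that \<phi> by blast
qed

lemma embedding_id: "embedding E E id"
  unfolding embedding_def by simp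

lemma rel_R2_refl: "modular_diagram L \<Gamma> \<Longrightarrow> rel_R2 L \<Gamma> \<Gamma>"
  unfolding rel_R2_def using embedding_id by (auto split: prod.splits intro!: exI[of _ id])

text \<open>(R2) is a congruence for the product; (R2) in one factor is the case where the other
  factor is related to itself by the identity.\<close>

lemma rel_R2_dprod:
  assumes L: "geometric_lattice L" and r1: "rel_R2 L (E1, i1, J1) (E1', i1', J1')"
    and r2: "rel_R2 L (E2, i2, J2) (E2', i2', J2')"
  shows "rel_R2 L (dprod L (E1, i1, J1) (E2, i2, J2)) (dprod L (E1', i1', J1') (E2', i2', J2'))"
proof -
  obtain \<phi>1 where \<phi>1: "ext_embedding L E1 i1 E1' i1' \<phi>1" "rk E1 (top E1) = rk E1' (top E1')" "J1'
    = map \<phi>1 J1"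
    using ext_embedding_if_rel_R2[OF L r1] .
  obtain \<phi>2 where \<phi>2: "ext_embedding L E2 i2 E2' i2' \<phi>2" "rk E2 (top E2) = rk E2' (top E2')" "J2'
    = map \<phi>2 J2"
    using ext_embedding_if_rel_R2[OF L r2] .
  interpret pushout_map L E1 i1 E1' i1' \<phi>1 E2 i2 E2' i2' \<phi>2
    using \<phi>1(1) \<phi>2(1) by (simp add: pushout_map_def)
  have d: "modular_diagram L (E1, i1, J1)" "modular_diagram L (E1', i1', J1')"
    "modular_diagram L (E2, i2, J2)" "modular_diagram L (E2', i2', J2')"
    using r1 r2 unfolding rel_R2_def by auto
  have "set J1 \<subseteq> flats E1" "set J2 \<subseteq> flats E2"
    using modular_diagramD(2)[OF d(1)] modular_diagramD(2)[OF d(3)] e1.m.E.atom_in_flats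
      e2.m.E.atom_in_flats
    by auto
  then have "Q'.lift_word J1' J2' = map Phi (Q.lift_word J1 J2)"
    using \<phi>1(3) \<phi>2(3) Phi_lift1 Phi_lift2 by auto
  then show ?thesis
    unfolding rel_R2_def dprod_eq
    using modular_diagram_dprod[OF L d(1,3)] modular_diagram_dprod[OF L d(2,4)] Phi_embedding
      Phi_rk_top[OF \<phi>1(2) \<phi>2(2)] Phi_iota
    unfolding dprod_eq by auto
qed

text \<open>A factor of a finite lattice is a finite lattice: it embeds as the slice \<open>A \<times> {e}\<close>.\<close>

locale prod_factor = P: fin_lattice P for P +
  fixes A B :: "nat lat" and \<psi> :: "nat \<Rightarrow> nat \<times> nat" and e :: nat
  assumes iso: "order_iso_prod P A B \<psi>" and e: "e \<in> flats B" "lle B e e"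
begin

definition em :: "nat \<Rightarrow> nat" where
  "em \<alpha> = inv_into (flats P) \<psi> (\<alpha>, e)"

lemma psi_image: "\<psi> ` flats P = flats A \<times> flats B"
  and psi_le: "X \<in> flats P \<Longrightarrow> Y \<in> flats P
    \<Longrightarrow> lle P X Y \<longleftrightarrow> lle A (fst (\<psi> X)) (fst (\<psi> Y)) \<and> lle B (snd (\<psi> X)) (snd (\<psi> Y))"
  using iso unfolding order_iso_prod_def bij_betw_def by auto

lemma em_in: "\<alpha> \<in> flats A \<Longrightarrow> em \<alpha> \<in> flats P"
  and psi_em: "\<alpha> \<in> flats A \<Longrightarrow> \<psi> (em \<alpha>) = (\<alpha>, e)"
  unfolding em_def
    using e psi_image inv_into_into[of "(\<alpha>, e)" \<psi> "flats P"] f_inv_into_f[of "(\<alpha>, e)" \<psi> "flats P"]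
  by auto

lemma fst_psi_in: "X \<in> flats P \<Longrightarrow> fst (\<psi> X) \<in> flats A"
  using psi_image imageI[of X "flats P" \<psi>] by (auto simp: mem_Times_iff)

lemma le_iff_em_le: "\<alpha> \<in> flats A \<Longrightarrow> \<beta> \<in> flats A \<Longrightarrow> lle A \<alpha> \<beta> \<longleftrightarrow> lle P (em \<alpha>) (em \<beta>)"
  using psi_le[OF em_in em_in] psi_em e by simp

lemma fst_psi_le_if_em_le: "\<gamma> \<in> flats A \<Longrightarrow> Z \<in> flats P \<Longrightarrow> lle P (em \<gamma>) Z \<Longrightarrow> lle A \<gamma> (fst (\<psi> Z))"
  and fst_psi_le_if_le_em: "\<gamma> \<in> flats A \<Longrightarrow> Z \<in> flats P \<Longrightarrow> lle P Z (em \<gamma>) \<Longrightarrow> lle A (fst (\<psi> Z)) \<gamma>"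
  using psi_le[OF em_in] psi_le[OF _ em_in] psi_em by auto

lemma is_lub_factor:
  assumes ab: "\<alpha> \<in> flats A" "\<beta> \<in> flats A"
  shows "is_lub A {\<alpha>, \<beta>} (fst (\<psi> (join P (em \<alpha>) (em \<beta>))))"
  unfolding is_lub_def
proof (intro conjI ballI impI)
  have em: "em \<alpha> \<in> flats P" "em \<beta> \<in> flats P" using em_in ab by auto
  then show "fst (\<psi> (join P (em \<alpha>) (em \<beta>))) \<in> flats A" using fst_psi_in by simp
  show "lle A \<gamma> (fst (\<psi> (join P (em \<alpha>) (em \<beta>))))" if "\<gamma> \<in> {\<alpha>, \<beta>}" for \<gamma>
    using that fst_psi_le_if_em_le ab em P.join_upper1 P.join_upper2 by auto
  show "lle A (fst (\<psi> (join P (em \<alpha>) (em \<beta>)))) w" if "w \<in> flats A" "\<forall>\<gamma>\<in>{\<alpha>, \<beta>}. lle A \<gamma> w" for w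
    using that fst_psi_le_if_le_em[OF that(1) P.join_in[OF em]] P.join_least[OF em em_in]
      le_iff_em_le ab by simp
qed

lemma is_glb_factor:
  assumes ab: "\<alpha> \<in> flats A" "\<beta> \<in> flats A"
  shows "is_glb A {\<alpha>, \<beta>} (fst (\<psi> (meet P (em \<alpha>) (em \<beta>))))"
  unfolding is_glb_def
proof (intro conjI ballI impI)
  have em: "em \<alpha> \<in> flats P" "em \<beta> \<in> flats P" using em_in ab by auto
  then show "fst (\<psi> (meet P (em \<alpha>) (em \<beta>))) \<in> flats A" using fst_psi_in by simp
  show "lle A (fst (\<psi> (meet P (em \<alpha>) (em \<beta>)))) \<gamma>" if "\<gamma> \<in> {\<alpha>, \<beta>}" for \<gamma>
    using that fst_psi_le_if_le_em ab em P.meet_lower1 P.meet_lower2 by auto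
  show "lle A w (fst (\<psi> (meet P (em \<alpha>) (em \<beta>))))" if "w \<in> flats A" "\<forall>\<gamma>\<in>{\<alpha>, \<beta>}. lle A w \<gamma>" for w
    using that fst_psi_le_if_em_le[OF that(1) P.meet_in[OF em]] P.meet_greatest[OF em em_in]
      le_iff_em_le ab by simp
qed

lemma factor_finite_lattice: "finite_lattice A"
  unfolding finite_lattice_def
proof (intro conjI ballI impI)
  have "flats A \<subseteq> fst ` \<psi> ` flats P"
  proof
    fix \<alpha> assume "\<alpha> \<in> flats A"
    then show "\<alpha> \<in> fst ` \<psi> ` flats P" using em_in psi_em by (metis fst_conv imageI)
  qed
  then show "finite (flats A)" using P.finite_flats finite_subset by blast
  show "flats A \<noteq> {}" using P.flats_nonempty fst_psi_in by blast
next
  fix \<alpha> \<beta> \<gamma> assume abc: "\<alpha> \<in> flats A" "\<beta> \<in> flats A" "\<gamma> \<in> flats A"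
  show "lle A \<alpha> \<alpha>" using le_iff_em_le em_in abc by simp
  show "lle A \<alpha> \<beta> \<and> lle A \<beta> \<alpha> \<Longrightarrow> \<alpha> = \<beta>"
    using le_iff_em_le P.le_antisym em_in psi_em abc by (metis fst_conv)
  show "lle A \<alpha> \<beta> \<and> lle A \<beta> \<gamma> \<Longrightarrow> lle A \<alpha> \<gamma>"
    using le_iff_em_le P.le_trans[OF em_in em_in em_in] abc by blast
  show "\<exists>z. is_lub A {\<alpha>, \<beta>} z" "\<exists>z. is_glb A {\<alpha>, \<beta>} z"
    using is_lub_factor is_glb_factor abc by blast+
qed

end

lemma nontrivialI: "finite (flats A) \<Longrightarrow> a \<in> flats A \<Longrightarrow> b \<in> flats A \<Longrightarrow> a \<noteq> b \<Longrightarrow> nontrivial A"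
  unfolding nontrivial_def by (metis card_2_iff card_mono empty_subsetI insert_subset)

lemma nontrivialE:
  assumes "nontrivial A"
  obtains a b where "a \<in> flats A" "b \<in> flats A" "a \<noteq> b"
proof -
  have "2 \<le> card (flats A)" using assms unfolding nontrivial_def .
  then obtain S where "S \<subseteq> flats A" "card S = 2" by (meson obtain_subset_with_card_n)
  then show ?thesis using that by (auto simp: card_2_iff)
qed

locale product_split = mod_ext L E i for L :: "'a lat" and E i +
  fixes B1 B2 :: "nat lat" and \<psi> :: "nat \<Rightarrow> nat \<times> nat"
  assumes B1: "finite_lattice B1" and B2: "finite_lattice B2"
    and iso: "order_iso_prod E B1 B2 \<psi>" and Fi_first: "snd (\<psi> (F_iota L i)) = bot B2"
begin

sublocale B1: fin_lattice B1 using B1 by unfold_locales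
sublocale B2: fin_lattice B2 using B2 by unfold_locales

definition psi_inv :: "nat \<times> nat \<Rightarrow> nat" where
  "psi_inv = inv_into (flats E) \<psi>"

lemma psi_bij: "bij_betw \<psi> (flats E) (flats B1 \<times> flats B2)"
  and psi_le: "x \<in> flats E \<Longrightarrow> y \<in> flats E
    \<Longrightarrow> lle E x y \<longleftrightarrow> lle B1 (fst (\<psi> x)) (fst (\<psi> y)) \<and> lle B2 (snd (\<psi> x)) (snd (\<psi> y))"
  using iso unfolding order_iso_prod_def by auto

lemma psi_in: "x \<in> flats E \<Longrightarrow> fst (\<psi> x) \<in> flats B1" "x \<in> flats E \<Longrightarrow> snd (\<psi> x) \<in> flats B2"
  using psi_bij unfolding bij_betw_def by (metis image_eqI mem_Times_iff)+

lemma psi_inv: "b \<in> flats B1 \<Longrightarrow> c \<in> flats B2 \<Longrightarrow> psi_inv (b, c) \<in> flats E"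
  "b \<in> flats B1 \<Longrightarrow> c \<in> flats B2 \<Longrightarrow> \<psi> (psi_inv (b, c)) = (b, c)"
  unfolding psi_inv_def using psi_bij unfolding bij_betw_def by (auto intro: inv_into_into f_inv_into_f)

lemma psi_inj: "x \<in> flats E \<Longrightarrow> y \<in> flats E \<Longrightarrow> \<psi> x = \<psi> y \<Longrightarrow> x = y"
  using psi_bij unfolding bij_betw_def inj_on_def by blast

lemma snd_psi_i:
  assumes "a \<in> flats L"
  shows "snd (\<psi> (i a)) = bot B2"
proof -
  have "lle B2 (snd (\<psi> (i a))) (bot B2)"
    using psi_le[of "i a" Fi] i_le_Fi Fi_first Fi_in assms unfolding Fi_def by simp
  then show ?thesis using B2.le_antisym B2.bot_le psi_in assms by simp
qed

text \<open>Since \<open>Fi\<close> lies in the first factor, the restriction only sees the first coordinate.\<close>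

lemma restr_first_factor: "x \<in> flats E \<Longrightarrow> restr x = restr (psi_inv (fst (\<psi> x), bot B2))"
proof (rule L.eq_if_same_lower_bounds)
  fix a assume x: "x \<in> flats E" and a: "a \<in> flats L"
  define x0 where "x0 = psi_inv (fst (\<psi> x), bot B2)"
  have x0: "x0 \<in> flats E" "\<psi> x0 = (fst (\<psi> x), bot B2)" unfolding x0_def using psi_inv psi_in x by auto
  have "lle E (i a) x \<longleftrightarrow> lle E (i a) x0"
    using psi_le[OF _ x] psi_le[OF _ x0(1)] x0(2) snd_psi_i[OF a] B2.bot_le psi_in x a by simp
  then show "lle L a (restr x) \<longleftrightarrow> lle L a (restr x0)"
    using i_le_iff_le_restr a x x0 by simp
qed (simp_all add: psi_inv psi_in)

end

text \<open>If \<open>E1 = B1 \<times> B2\<close> with \<open>Fi\<close> in the first factor, the pushout splits as \<open>A \<times> B2\<close>,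
  where \<open>A\<close> is the pushout of \<open>B1 \<cong> B1 \<times> {\<bottom>}\<close> with \<open>E2\<close>.\<close>

locale pushout_split = product_split L E1 i1 B1 B2 \<psi> + m2: mod_ext L E2 i2
  for L :: "'a lat" and E1 i1 B1 B2 \<psi> E2 i2
begin

sublocale Q: pushout_ext L E1 i1 E2 i2 by unfold_locales

definition A :: "nat lat" where
  "A = \<lparr> flats = prod_encode ` {(b, y). b \<in> flats B1 \<and> y \<in> flats E2 \<and> Q.in_P (psi_inv (b, bot B2)) y},
        lle = (\<lambda>x y. lle B1 (fst (prod_decode x)) (fst (prod_decode y))
                   \<and> lle E2 (snd (prod_decode x)) (snd (prod_decode y))) \<rparr>"

lemma A_flats: "pe b y \<in> flats A \<longleftrightarrow> b \<in> flats B1 \<and> y \<in> flats E2 \<and> Q.in_P (psi_inv (b, bot B2)) y"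
  unfolding A_def by (auto simp: inj_image_mem_iff[OF inj_prod_encode])

lemma A_le: "lle A (pe b y) (pe b' y') \<longleftrightarrow> lle B1 b b' \<and> lle E2 y y'"
  unfolding A_def by simp

lemma A_cases: "\<alpha> \<in> flats A \<Longrightarrow> (\<And>b y. \<alpha> = pe b y \<Longrightarrow> b \<in> flats B1 \<Longrightarrow> y \<in> flats E2
    \<Longrightarrow> Q.in_P (psi_inv (b, bot B2)) y \<Longrightarrow> thesis) \<Longrightarrow> thesis"
  unfolding A_def by auto

definition psi_P :: "nat \<Rightarrow> nat \<times> nat" where
  "psi_P X = (pe (fst (\<psi> (fst (prod_decode X)))) (snd (prod_decode X)), snd (\<psi> (fst (prod_decode X))))"

lemma psi_P_pe[simp]: "psi_P (pe x1 x2) = (pe (fst (\<psi> x1)) x2, snd (\<psi> x1))"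
  unfolding psi_P_def by simp

lemma in_P_psi_inv: "Q.in_P x1 x2 \<Longrightarrow> Q.in_P (psi_inv (fst (\<psi> x1), bot B2)) x2"
  unfolding Q.in_P_def using restr_first_factor psi_inv psi_in by (metis B2.bot_in)

lemma psi_P_bij: "bij_betw psi_P (flats Q.P) (flats A \<times> flats B2)"
  unfolding bij_betw_def
proof (intro conjI)
  show "inj_on psi_P (flats Q.P)"
  proof (rule inj_onI)
    fix X Y assume X: "X \<in> flats Q.P" and Y: "Y \<in> flats Q.P" and eq: "psi_P X = psi_P Y"
    obtain x1 x2 where x: "X = pe x1 x2" "Q.in_P x1 x2" using X Q.P_cases by blast
    obtain y1 y2 where y: "Y = pe y1 y2" "Q.in_P y1 y2" using Y Q.P_cases by blast
    have "\<psi> x1 = \<psi> y1" "x2 = y2" using eq x y by (auto simp: prod_eq_iff)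
    then show "X = Y" using psi_inj x y Q.in_P_D by blast
  qed
  show "psi_P ` flats Q.P = flats A \<times> flats B2"
  proof
    show "psi_P ` flats Q.P \<subseteq> flats A \<times> flats B2"
      using A_flats in_P_psi_inv psi_in Q.in_P_D by (auto elim!: Q.P_cases)
  next
    show "flats A \<times> flats B2 \<subseteq> psi_P ` flats Q.P"
    proof
      fix Z assume "Z \<in> flats A \<times> flats B2"
      then obtain \<alpha> c where Z: "Z = (\<alpha>, c)" "\<alpha> \<in> flats A" "c \<in> flats B2" by blast
      obtain b y where bY: "\<alpha> = pe b y" "b \<in> flats B1" "y \<in> flats E2" "Q.in_P (psi_inv (b, bot B2)) y"
        using Z(2) A_cases by blast
      define x1 where "x1 = psi_inv (b, c)"
      have x1: "x1 \<in> flats E1" "\<psi> x1 = (b, c)" unfolding x1_def using psi_inv by (simp_all add: bY Z)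
      then have "Q.in_P x1 y" using restr_first_factor[OF x1(1)] bY(4) unfolding Q.in_P_def by simp
      then show "Z \<in> psi_P ` flats Q.P" using Q.P_flats x1 Z bY(1)
        by (metis image_eqI psi_P_pe fst_conv snd_conv)
    qed
  qed
qed

lemma psi_P_le: "X \<in> flats Q.P \<Longrightarrow> Y \<in> flats Q.P
    \<Longrightarrow> lle Q.P X Y \<longleftrightarrow> lle A (fst (psi_P X)) (fst (psi_P Y)) \<and> lle B2 (snd (psi_P X)) (snd (psi_P Y))"
  using psi_le Q.in_P_D A_le by (auto elim!: Q.P_cases)

lemma order_iso_prod_P: "order_iso_prod Q.P A B2 psi_P"
  unfolding order_iso_prod_def using psi_P_bij psi_P_le by blast

lemma A_finite_lattice: "finite_lattice A"
proof -
  interpret prod_factor Q.P A B2 psi_P "bot B2"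
    by unfold_locales (simp_all add: order_iso_prod_P)
  show ?thesis by (rule factor_finite_lattice)
qed

lemma A_nontrivial: "nontrivial B1 \<Longrightarrow> nontrivial A"
proof -
  assume "nontrivial B1"
  then obtain b b' where bb: "b \<in> flats B1" "b' \<in> flats B1" "b \<noteq> b'" by (rule nontrivialE)
  have mem: "pe a (i2 (restr (psi_inv (a, bot B2)))) \<in> flats A" if "a \<in> flats B1" for a
    unfolding A_flats Q.in_P_def using that psi_inv by simp
  show ?thesis
    using nontrivialI[OF _ mem[OF bb(1)] mem[OF bb(2)]] bb A_finite_lattice
      unfolding finite_lattice_def by simp
qed

lemma psi_P_Fi: "snd (psi_P (F_iota L (iota12 i1 i2))) = bot B2"
  using Q.F_iota_P Fi_first unfolding Fi_def by simp

end

lemma pushout_product_split: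
  assumes "geometric_lattice L" "modular_extension L E1 i1" "modular_extension L E2 i2"
    and "finite_lattice B1" "finite_lattice B2" "nontrivial B1"
    and "order_iso_prod E1 B1 B2 \<psi>" "snd (\<psi> (F_iota L i1)) = bot B2"
  obtains A \<psi>' where "finite_lattice A" "nontrivial A" "order_iso_prod (pushout L E1 i1 E2 i2) A B2 \<psi>'"
    "snd (\<psi>' (F_iota L (iota12 i1 i2))) = bot B2"
proof -
  interpret pushout_split L E1 i1 B1 B2 \<psi> E2 i2
    using assms unfolding pushout_split_def product_split_def product_split_axioms_def mod_ext_def by simp
  show ?thesis using that A_finite_lattice A_nontrivial assms(6) order_iso_prod_P psi_P_Fi by blast
qed

lemma rel_R4_dprod_left:
  assumes L: "geometric_lattice L" and r: "rel_R4 L (E1, i1, J1)" and d: "modular_diagram L (E2, i2, J2)"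
  shows "rel_R4 L (dprod L (E1, i1, J1) (E2, i2, J2))"
proof -
  have d1: "modular_diagram L (E1, i1, J1)" using r unfolding rel_R4_def by simp
  obtain B1 B2 \<psi> where B: "finite_lattice B1" "finite_lattice B2" "nontrivial B1" "nontrivial B2"
    "order_iso_prod E1 B1 B2 \<psi>" "snd (\<psi> (F_iota L i1)) = bot B2"
    using r unfolding rel_R4_def by auto
  obtain A \<psi>' where "finite_lattice A" "nontrivial A" "order_iso_prod (pushout L E1 i1 E2 i2) A B2 \<psi>'"
    "snd (\<psi>' (F_iota L (iota12 i1 i2))) = bot B2"
    using pushout_product_split[OF L modular_diagramD(1)[OF d1] modular_diagramD(1)[OF d] B(1-3,5,6)] .
  then show ?thesis
    unfolding rel_R4_def dprod_eq using modular_diagram_dprod[OF L d1 d, unfolded dprod_eq] B by auto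
qed

lemma rel_R4_dprod_right:
  assumes L: "geometric_lattice L" and r: "rel_R4 L (E2, i2, J2)" and d: "modular_diagram L (E1, i1, J1)"
  shows "rel_R4 L (dprod L (E1, i1, J1) (E2, i2, J2))"
proof -
  have d2: "modular_diagram L (E2, i2, J2)" using r unfolding rel_R4_def by simp
  interpret pushout_ext L E1 i1 E2 i2 using pushout_ext_if_modular_diagrams[OF L d d2] .
  obtain B1 B2 \<psi> where B: "finite_lattice B1" "finite_lattice B2" "nontrivial B1" "nontrivial B2"
    "order_iso_prod E2 B1 B2 \<psi>" "snd (\<psi> (F_iota L i2)) = bot B2"
    using r unfolding rel_R4_def by auto
  obtain A \<psi>' where A: "finite_lattice A" "nontrivial A" "order_iso_prod (pushout L E2 i2 E1 i1) A B2 \<psi>'"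
    "snd (\<psi>' (F_iota L (iota12 i2 i1))) = bot B2"
    using pushout_product_split[OF L modular_diagramD(1)[OF d2] modular_diagramD(1)[OF d] B(1-3,5,6)] .
  have "order_iso_prod P A B2 (\<psi>' \<circ> swap_code)" using order_iso_prod_swap[OF A(3)] .
  moreover have "snd ((\<psi>' \<circ> swap_code) (F_iota L (iota12 i1 i2))) = bot B2"
    using A(4) unfolding F_iota_def iota12_def by simp
  ultimately show ?thesis
    unfolding rel_R4_def dprod_eq using modular_diagram_dprod[OF L d d2, unfolded dprod_eq] A(1,2) B(2,4)
    by blast
qed

section \<open>Bilinear extension\<close>

definition respects_relations :: "'a lat \<Rightarrow> ('a mdiag \<Rightarrow> 'a mdiag) \<Rightarrow> bool" where
  "respects_relations L f \<longleftrightarrow>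
     (\<forall>\<Gamma> \<Gamma>'. rel_R1 L \<Gamma> \<Gamma>' \<longrightarrow> rel_R1 L (f \<Gamma>) (f \<Gamma>'))
   \<and> (\<forall>\<Gamma> \<Gamma>'. rel_R2 L \<Gamma> \<Gamma>' \<longrightarrow> rel_R2 L (f \<Gamma>) (f \<Gamma>'))
   \<and> (\<forall>\<Gamma>. rel_R3 L \<Gamma> \<longrightarrow> rel_R3 L (f \<Gamma>))
   \<and> (\<forall>\<Gamma>. rel_R4 L \<Gamma> \<longrightarrow> rel_R4 L (f \<Gamma>))
   \<and> (\<forall>\<Gamma>. rel_R5 L \<Gamma> \<longrightarrow> rel_R5 L (f \<Gamma>))"

lemma respects_relations_dprod_left:
  assumes L: "geometric_lattice L" and d: "modular_diagram L (E2, i2, J2)"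
  shows "respects_relations L (\<lambda>\<Gamma>. dprod L \<Gamma> (E2, i2, J2))"
  unfolding respects_relations_def split_paired_All
  using rel_R1_dprod_left[OF L _ d] rel_R2_dprod[OF L _ rel_R2_refl[OF d]] rel_R3_dprod_left[OF L _ d]
    rel_R4_dprod_left[OF L _ d] rel_R5_dprod_left[OF L _ d]
  by blast

lemma respects_relations_dprod_right:
  assumes L: "geometric_lattice L" and d: "modular_diagram L (E1, i1, J1)"
  shows "respects_relations L (\<lambda>\<Gamma>. dprod L (E1, i1, J1) \<Gamma>)"
  unfolding respects_relations_def split_paired_All
  using rel_R1_dprod_right[OF L _ d] rel_R2_dprod[OF L rel_R2_refl[OF d]] rel_R3_dprod_right[OF L _ d]
    rel_R4_dprod_right[OF L _ d] rel_R5_dprod_right[OF L _ d]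
  by blast

definition lin_map :: "('b \<Rightarrow> 'c) \<Rightarrow> ('b \<Rightarrow> rat) \<Rightarrow> 'c \<Rightarrow> rat" where
  "lin_map f u = (\<lambda>y. \<Sum>x\<in>supp u. u x * delta (f x) y)"

lemma lin_map_eq_sum:
  assumes "finite A" "supp u \<subseteq> A"
  shows "lin_map f u = (\<lambda>y. \<Sum>x\<in>A. u x * delta (f x) y)"
  unfolding lin_map_def
  by (intro ext sum.mono_neutral_left assms) (auto simp: supp_def)

lemma supp_add: "supp (\<lambda>x. u x + w x) \<subseteq> supp u \<union> supp w"
  and supp_diff: "supp (\<lambda>x. u x - w x) \<subseteq> supp u \<union> supp w"
  and supp_smult: "supp (\<lambda>x. c * u x) \<subseteq> supp u"
  and supp_delta: "supp (delta x) = {x}"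
  unfolding supp_def delta_def by auto

lemma lin_map_add:
  assumes "finite (supp u)" "finite (supp w)"
  shows "lin_map f (\<lambda>x. u x + w x) = (\<lambda>y. lin_map f u y + lin_map f w y)"
proof -
  have "finite (supp u \<union> supp w)" using assms by simp
  then show ?thesis
    using lin_map_eq_sum[of "supp u \<union> supp w" "\<lambda>x. u x + w x" f] lin_map_eq_sum[of "supp u \<union> supp w" u f]
      lin_map_eq_sum[of "supp u \<union> supp w" w f] supp_add[of u w]
    by (simp add: sum.distrib ring_distribs)
qed

lemma lin_map_diff:
  assumes "finite (supp u)" "finite (supp w)"
  shows "lin_map f (\<lambda>x. u x - w x) = (\<lambda>y. lin_map f u y - lin_map f w y)"
proof -
  have "finite (supp u \<union> supp w)" using assms by simp
  then show ?thesis
    using lin_map_eq_sum[of "supp u \<union> supp w" "\<lambda>x. u x - w x" f] lin_map_eq_sum[of "supp u \<union> supp w" u f]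
      lin_map_eq_sum[of "supp u \<union> supp w" w f] supp_diff[of u w]
    by (simp add: sum_subtractf left_diff_distrib)
qed

lemma lin_map_smult: "finite (supp u) \<Longrightarrow> lin_map f (\<lambda>x. c * u x) = (\<lambda>y. c * lin_map f u y)"
  using lin_map_eq_sum[of "supp u" "\<lambda>x. c * u x" f] supp_smult[of c u]
  by (simp add: lin_map_def sum_distrib_left mult.assoc)

lemma lin_map_delta: "lin_map f (delta x) = delta (f x)"
  unfolding lin_map_def supp_delta by (simp add: delta_def)

lemma rel_span_finite_supp: "u \<in> rel_span L \<Longrightarrow> finite (supp u)"
proof (induction rule: rel_span.induct)
  case zero
  then show ?case unfolding supp_def by simp
next
  case (add u v)
  then show ?case by (intro finite_subset[OF supp_add]) simp
next
  case (smult u c)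
  then show ?case by (intro finite_subset[OF supp_smult])
next
  case (R1 \<Gamma> \<Gamma>')
  then show ?case by (intro finite_subset[OF supp_add]) (simp add: supp_delta)
next
  case (R2 \<Gamma> \<Gamma>')
  then show ?case by (intro finite_subset[OF supp_diff]) (simp add: supp_delta)
qed (simp_all add: supp_delta)

lemma lin_map_rel_span:
  assumes f: "respects_relations L f" and u: "u \<in> rel_span L"
  shows "lin_map f u \<in> rel_span L"
  using u
proof (induction rule: rel_span.induct)
  case zero
  have "lin_map f (\<lambda>_. 0) = (\<lambda>_. 0)" unfolding lin_map_def supp_def by simp
  then show ?case using rel_span.zero by simp
next
  case (add u w)
  show ?case
    unfolding lin_map_add[OF rel_span_finite_supp[OF add.hyps(1)] rel_span_finite_supp[OF add.hyps(2)]]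
    using rel_span.add[OF add.IH] .
next
  case (smult u c)
  show ?case
    unfolding lin_map_smult[OF rel_span_finite_supp[OF smult.hyps]] using rel_span.smult[OF smult.IH] .
next
  case (R1 \<Gamma> \<Gamma>')
  then have "rel_R1 L (f \<Gamma>) (f \<Gamma>')" using f unfolding respects_relations_def by blast
  then show ?case
    unfolding lin_map_add[of "delta \<Gamma>" "delta \<Gamma>'", unfolded supp_delta, simplified] lin_map_delta
    by (rule rel_span.R1)
next
  case (R2 \<Gamma> \<Gamma>')
  then have "rel_R2 L (f \<Gamma>) (f \<Gamma>')" using f unfolding respects_relations_def by blast
  then show ?case
    unfolding lin_map_diff[of "delta \<Gamma>" "delta \<Gamma>'", unfolded supp_delta, simplified] lin_map_delta
    by (rule rel_span.R2)
next
  case (R3 \<Gamma>)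
  then show ?case using f rel_span.R3 unfolding respects_relations_def lin_map_delta by blast
next
  case (R4 \<Gamma>)
  then show ?case using f rel_span.R4 unfolding respects_relations_def lin_map_delta by blast
next
  case (R5 \<Gamma>)
  then show ?case using f rel_span.R5 unfolding respects_relations_def lin_map_delta by blast
qed

lemma sum_in_rel_span:
  "finite B \<Longrightarrow> (\<And>b. b \<in> B \<Longrightarrow> f b \<in> rel_span L) \<Longrightarrow> (\<lambda>x. \<Sum>b\<in>B. g b * f b x) \<in> rel_span L"
proof (induction B rule: finite_induct)
  case empty
  then show ?case using rel_span.zero by simp
next
  case (insert b B)
  then have "(\<lambda>x. g b * f b x + (\<Sum>b\<in>B. g b * f b x)) \<in> rel_span L"
    using rel_span.add[OF rel_span.smult] by blast
  then show ?case using insert by simp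
qed

lemma vprod_eq_sum:
  assumes "finite (supp u)" "finite (supp v)"
  shows "vprod L u v = (\<lambda>\<Delta>. \<Sum>a\<in>supp u. \<Sum>b\<in>supp v. u a * v b * delta (dprod L a b) \<Delta>)"
proof
  fix \<Delta>
  have fin: "finite (supp u \<times> supp v)" using assms by simp
  have "vprod L u v \<Delta>
      = (\<Sum>p\<in>supp u \<times> supp v. if dprod L (fst p) (snd p) = \<Delta> then u (fst p) * v (snd p) else 0)"
    unfolding vprod_def using sum.inter_filter[OF fin] by simp
  also have "\<dots> = (\<Sum>p\<in>supp u \<times> supp v. u (fst p) * v (snd p) * delta (dprod L (fst p) (snd p)) \<Delta>)"
    by (rule sum.cong) (auto simp: delta_def)
  finally show "vprod L u v \<Delta> = (\<Sum>a\<in>supp u. \<Sum>b\<in>supp v. u a * v b * delta (dprod L a b) \<Delta>)"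
    by (simp add: sum.cartesian_product case_prod_unfold)
qed

lemma vprod_eq_sum_lin_map:
  assumes "finite (supp u)" "finite (supp v)"
  shows "vprod L u v = (\<lambda>\<Delta>. \<Sum>b\<in>supp v. v b * lin_map (\<lambda>a. dprod L a b) u \<Delta>)"
    and "vprod L v u = (\<lambda>\<Delta>. \<Sum>b\<in>supp v. v b * lin_map (\<lambda>a. dprod L b a) u \<Delta>)"
  using vprod_eq_sum[OF assms] vprod_eq_sum[OF assms(2,1)]
  by (auto simp: lin_map_def sum_distrib_left mult_ac intro: sum.swap)

theorem mainTheorem7:
  fixes L :: "'a lat" and u v :: "'a mdiag \<Rightarrow> rat"
  assumes "geometric_lattice L" and "nontrivial L"
    and "u \<in> free_MD L" and "v \<in> free_MD L"
    and "u \<in> rel_span L"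
  shows "vprod L u v \<in> rel_span L \<and> vprod L v u \<in> rel_span L"
proof -
  have v: "finite (supp v)" "\<And>b. b \<in> supp v \<Longrightarrow> modular_diagram L b"
    using assms(4) unfolding free_MD_def by auto
  have u: "finite (supp u)" using rel_span_finite_supp assms(5) .
  have pushforward: "lin_map (\<lambda>a. dprod L a b) u \<in> rel_span L"
    "lin_map (\<lambda>a. dprod L b a) u \<in> rel_span L"
    if "b \<in> supp v" for b
    using lin_map_rel_span assms(1,5) v(2)[OF that] prod_cases3[of b]
      respects_relations_dprod_left respects_relations_dprod_right by metis+
  show ?thesis
    unfolding vprod_eq_sum_lin_map[OF u v(1)]
    using sum_in_rel_span[OF v(1), of "\<lambda>b. lin_map (\<lambda>a. dprod L a b) u" L v]
      sum_in_rel_span[OF v(1), of "\<lambda>b. lin_map (\<lambda>a. dprod L b a) u" L v] pushforward by simp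
qed

end
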